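(* Let $n,d,p,q\ge 1$ be integers, $\mathcal T\in\bigotimes^d\mathbb R^n$, $\mathcal F\in\mathrm S^p\mathbb R^n$, $\mathcal G\in\mathrm S^q\mathbb R^n$. Then: (a) $\|\mathrm{sym}(\mathcal T)\|_{HS}\le\|\mathcal T\|_{HS}$, with equality if and only if $\mathrm{sym}(\mathcal T)=\mathcal T$. (b) $\langle\mathcal T,\otimes^d x\rangle=\langle\mathrm{sym}(\mathcal T),\otimes^d x\rangle$ for all $x\in\mathbb R^n$. (c) $\|\mathrm{sym}(\mathcal T)\|_\sigma\le\|\mathcal T\|_\sigma$, with equality if and only if there exists $x\in\mathbb R^n$, $\|x\|_2=1$, with $\|\mathcal T\|_\sigma=|\langle\mathcal T,\otimes^d x\rangle|$. (d) $\mathcal F\otimes_{\mathrm{sym}}\mathcal G=\mathrm{sym}(\mathcal F\otimes\mathcal G)$. (e) $\|\mathcal F\otimes_{\mathrm{sym}}\mathcal G\|_{HS}\le\|\mathcal F\|_{HS}\|\mathcal G\|_{HS}$, with equality if and only if either $\mathcal F=0$ or $\mathcal G=0$, or there exist $c\in\mathbb R^n\setminus\{0\}$ and $a,b\in\mathbb R\setminus\{0\}$ with $\mathcal F=a\otimes^p c$ and $\mathcal G=b\otimes^q c$. (f) Let $f(x)=\langle\mathcal F,\otimes^p x\rangle$ and $g(x)=\langle\mathcal G,\otimes^q x\rangle$. Then (i) $|f(c)|\le\|f\|_{HS}\|c\|_2^p$ for all $c\in\mathbb R^n$; for $c\ne0$ equality holds iff there is $a\in\mathbb R$ with $f(x)=a(c^\top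 x)^p$ for all $x$; (ii) $\|fg\|_{HS}\le\|f\|_{HS}\|g\|_{HS}$, with equality iff $f=0$ or $g=0$, or there exist $c\in\mathbb R^n\setminus\{0\}$, $a,b\in\mathbb R\setminus\{0\}$ with $f(x)=a(c^\top x)^p$ and $g(x)=b(c^\top x)^q$; (iii) $\|fg\|_\sigma\le\|f\|_\sigma\|g\|_\sigma$, with equality iff there is $x$ with $\|x\|_2=1$, $|f(x)|=\|f\|_\sigma$ and $|g(x)|=\|g\|_\sigma$; (iv) $\|f^k\|_\sigma=\|f\|_\sigma^k$ for every positive integer $k$.
   Context: For $\mathcal S=[s_{i_1,\dots,i_d}],\mathcal T=[t_{i_1,\dots,i_d}]\in\bigotimes_{j=1}^d\mathbb R^{n_j}$: $\langle\mathcal S,\mathcal T\rangle=\sum s_{i_1,\dots,i_d}t_{i_1,\dots,i_d}$, $\|\mathcal T\|_{HS}=\sqrt{\langle\mathcal T,\mathcal T\rangle}$, and the spectral norm $\|\mathcal T\|_\sigma=\max\{|\langle\mathcal T,x_1\otimes\cdots\otimes x_d\rangle|: x_j\in\mathbb R^{n_j},\|x_j\|_2=1\}$. $\otimes^d x=x\otimes\cdots\otimes x$ ($d$ times). $\mathrm S^d\mathbb R^n\subset\bigotimes^d\mathbb R^n$ is the subspace of symmetric tensors (entries invariant under permutation of indices). The symmetrization $\mathrm{sym}(\mathcal T)$ has entries $\frac1{d!}\sum_{\sigma\in\Sigma_d}t_{i_{\sigma(1)},\dots,i_{\sigma(d)}}$. Every real homogeneous polynomial $f$ of degree $p$ in $n$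 variables is $f(x)=\langle\mathcal F,\otimes^p x\rangle$ for a unique $\mathcal F\in\mathrm S^p\mathbb R^n$; one sets $\|f\|_{HS}:=\|\mathcal F\|_{HS}$ and $\|f\|_\sigma:=\|\mathcal F\|_\sigma$, and it holds that $\|f\|_\sigma=\max\{|f(x)|:\|x\|_2=1\}$. For $\mathcal F\in\mathrm S^p\mathbb R^n,\mathcal G\in\mathrm S^q\mathbb R^n$, $\mathcal F\otimes_{\mathrm{sym}}\mathcal G$ denotes the unique $\mathcal H\in\mathrm S^{p+q}\mathbb R^n$ with $\langle\mathcal H,\otimes^{p+q}x\rangle=\langle\mathcal F,\otimes^p x\rangle\langle\mathcal G,\otimes^q x\rangle$ for all $x$. *)

theory Defs
  imports "HOL-Analysis.Analysis"
begin

text \<open>Tensors of order d over R^n, with n = CARD('n).  A tensor is a function on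
index lists (multi-indices) 'n list, required to vanish off the lists of length d.
Vectors in R^n are elements of real^'n.\<close>

definition idx :: "nat \<Rightarrow> 'n::finite list set" where
  "idx d = {is. length is = d}"

definition is_tensor :: "nat \<Rightarrow> ('n::finite list \<Rightarrow> real) \<Rightarrow> bool" where
  "is_tensor d T \<longleftrightarrow> (\<forall>is. length is \<noteq> d \<longrightarrow> T is = 0)"

definition tinner :: "nat \<Rightarrow> ('n::finite list \<Rightarrow> real) \<Rightarrow> ('n list \<Rightarrow> real) \<Rightarrow> real" where
  "tinner d S T = (\<Sum>is\<in>idx d. S is * T is)"

definition hs_norm :: "nat \<Rightarrow> ('n::finite list \<Rightarrow> real) \<Rightarrow> real" where
  "hs_norm d T = sqrt (tinner d T T)"

definition tprod :: "(real^'n::finite) list \<Rightarrow> 'n list \<Rightarrow> real" where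
  "tprod xs is = (if length is = length xs then (\<Prod>j<length xs. (xs ! j) $ (is ! j)) else 0)"

definition tpow :: "nat \<Rightarrow> real^'n::finite \<Rightarrow> 'n list \<Rightarrow> real" where
  "tpow d x = tprod (replicate d x)"

definition spec_norm :: "nat \<Rightarrow> ('n::finite list \<Rightarrow> real) \<Rightarrow> real" where
  "spec_norm d T = Sup {\<bar>tinner d T (tprod xs)\<bar> | xs.
       length xs = d \<and> (\<forall>x\<in>set xs. norm x = 1)}"

definition perm_idx :: "(nat \<Rightarrow> nat) \<Rightarrow> 'a list \<Rightarrow> 'a list" where
  "perm_idx \<sigma> is = map (\<lambda>j. is ! \<sigma> j) [0..<length is]"

definition tsym :: "nat \<Rightarrow> ('n::finite list \<Rightarrow> real) \<Rightarrow> 'n list \<Rightarrow> real" where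
  "tsym d T is = (if length is = d then
      (1 / fact d) * (\<Sum>\<sigma>\<in>{\<sigma>. \<sigma> permutes {..<d}}. T (perm_idx \<sigma> is)) else 0)"

definition symmetric_tensor :: "nat \<Rightarrow> ('n::finite list \<Rightarrow> real) \<Rightarrow> bool" where
  "symmetric_tensor d T \<longleftrightarrow> is_tensor d T \<and>
     (\<forall>is \<sigma>. length is = d \<longrightarrow> \<sigma> permutes {..<d} \<longrightarrow> T (perm_idx \<sigma> is) = T is)"

definition ttensor :: "nat \<Rightarrow> nat \<Rightarrow> ('n::finite list \<Rightarrow> real) \<Rightarrow> ('n list \<Rightarrow> real) \<Rightarrow> 'n list \<Rightarrow> real" where
  "ttensor p q F G is = (if length is = p + q then F (take p is) * G (drop p is) else 0)"

definition sym_tensor_prod :: "nat \<Rightarrow> nat \<Rightarrow> ('n::finite list \<Rightarrow> real) \<Rightarrow> ('n list \<Rightarrow> real) \<Rightarrow> 'n list \<Rightarrow> real" where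
  "sym_tensor_prod p q F G = (THE H. symmetric_tensor (p + q) H \<and>
     (\<forall>x. tinner (p + q) H (tpow (p + q) x) = tinner p F (tpow p x) * tinner q G (tpow q x)))"

text \<open>Homogeneous polynomials of degree p are represented as functions
  f :: real^'n \<Rightarrow> real; their (unique) symmetric tensor and norms:\<close>
definition poly_tensor :: "nat \<Rightarrow> (real^'n::finite \<Rightarrow> real) \<Rightarrow> 'n list \<Rightarrow> real" where
  "poly_tensor p f = (THE F. symmetric_tensor p F \<and> (\<forall>x. f x = tinner p F (tpow p x)))"

definition poly_hs :: "nat \<Rightarrow> (real^'n::finite \<Rightarrow> real) \<Rightarrow> real" where
  "poly_hs p f = hs_norm p (poly_tensor p f)"

definition poly_sigma :: "nat \<Rightarrow> (real^'n::finite \<Rightarrow> real) \<Rightarrow> real" where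
  "poly_sigma p f = spec_norm p (poly_tensor p f)"

end

theory Submission
  imports Defs
begin

text \<open>Symmetrization is the orthogonal projection onto the symmetric tensors and is self-adjoint;
  this gives (a), (b) and the inequality in (c). A symmetric tensor is determined by its values
  \<open>\<langle>S, x\<^sup>\<otimes>\<^sup>d\<rangle>\<close> (polarization, by differentiating along lines), which identifies
  \<open>F \<otimes>\<^sub>s\<^sub>y\<^sub>m G\<close> with \<open>sym(F \<otimes> G)\<close> and the tensor of a product of polynomials. Equality in (e)
  means that \<open>F \<otimes> G\<close> is already symmetric; swapping one index of \<open>F\<close> with one of \<open>G\<close> then
  forces all slices of \<open>F\<close> and of \<open>G\<close> to be parallel to one vector \<open>c\<close>.

  The remaining spectral statements rest on Banach's theorem: the spectral norm of a symmetric
  tensor is attained at some \<open>x \<otimes> \<dots> \<otimes> x\<close>. Among the maximizing unit families choose one of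
  largest frame potential \<open>\<parallel>\<Sum>\<^sub>k f\<^sub>k f\<^sub>k\<^sup>T\<parallel>\<^sup>2\<close>. Two non-parallel members \<open>a, b\<close> could be
  replaced both by \<open>(a + b)/\<parallel>a + b\<parallel>\<close> or both by \<open>(a - b)/\<parallel>a - b\<parallel>\<close>: both families are
  still maximizing, and the frame potential is strictly convex along the decomposition
  \<open>a a\<^sup>T + b b\<^sup>T = (1 + a\<bullet>b) u u\<^sup>T + (1 - a\<bullet>b) v v\<^sup>T\<close> into the two new unit vectors
  \<open>u, v\<close>, so one of them increases it.\<close>

section \<open>Inner product of tensors\<close>

lemma finite_idx [simp]: "finite (idx d :: 'n::finite list set)"
proof -
  have "idx d = {xs::'n list. set xs \<subseteq> UNIV \<and> length xs = d}" by (auto simp: idx_def)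
  then show ?thesis using finite_lists_length_eq[of "UNIV::'n set" d] by simp
qed

lemma mem_idx [simp]: "ks \<in> idx d \<longleftrightarrow> length ks = d"
  unfolding idx_def by simp

lemma tpow_apply: "tpow d x ks = (if length ks = d then (\<Prod>j<d. x $ (ks ! j)) else 0)"
  by (simp add: tpow_def tprod_def)

lemma tinner_commute: "tinner d S T = tinner d T S"
  unfolding tinner_def by (simp add: mult.commute)

lemma tinner_self_nonneg: "tinner d A A \<ge> 0"
  unfolding tinner_def by (simp add: sum_nonneg)

lemma tinner_self_eq_0_iff: "tinner d A A = 0 \<longleftrightarrow> (\<forall>ks\<in>idx d. A ks = 0)"
  unfolding tinner_def by (simp add: sum_nonneg_eq_0_iff)

lemma tinner_scale_left: "tinner d (\<lambda>ks. c * A ks) B = c * tinner d A B"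
  unfolding tinner_def by (simp add: sum_distrib_left mult.assoc)

lemma tinner_diff_left: "tinner d (\<lambda>ks. A ks - B ks) C = tinner d A C - tinner d B C"
  unfolding tinner_def by (simp add: left_diff_distrib sum_subtractf)

lemma tinner_expand:
  "tinner d (\<lambda>ks. A ks - c * B ks) (\<lambda>ks. A ks - c * B ks)
     = tinner d A A - 2 * c * tinner d A B + c\<^sup>2 * tinner d B B"
proof -
  have "tinner d (\<lambda>ks. A ks - c * B ks) (\<lambda>ks. A ks - c * B ks)
      = (\<Sum>ks\<in>idx d. A ks * A ks - 2 * c * (A ks * B ks) + c\<^sup>2 * (B ks * B ks))"
    unfolding tinner_def by (intro sum.cong refl) (simp add: algebra_simps power2_eq_square)
  then show ?thesis
    unfolding tinner_def by (simp add: sum.distrib sum_subtractf sum_distrib_left)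
qed

lemma tensor_eqI:
  assumes "is_tensor d A" "is_tensor d B" "\<And>ks. length ks = d \<Longrightarrow> A ks = B ks"
  shows "A = B"
  using assms unfolding is_tensor_def by (metis ext)

lemma is_tensor_scale: "is_tensor d A \<Longrightarrow> is_tensor d (\<lambda>ks. c * A ks)"
  by (simp add: is_tensor_def)

lemma is_tensor_tpow: "is_tensor d (tpow d x)"
  by (simp add: is_tensor_def tpow_apply)

lemma hs_norm_scale: "hs_norm d (\<lambda>ks. a * A ks) = \<bar>a\<bar> * hs_norm d A"
proof -
  have "tinner d (\<lambda>ks. a * A ks) (\<lambda>ks. a * A ks) = a\<^sup>2 * tinner d A A"
    unfolding tinner_def by (simp add: sum_distrib_left power2_eq_square mult_ac)
  then show ?thesis by (simp add: hs_norm_def real_sqrt_mult)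
qed

lemma abs_tinner_le_hs_norm: "\<bar>tinner d A B\<bar> \<le> hs_norm d A * hs_norm d B"
proof -
  have "(tinner d A B)\<^sup>2 \<le> tinner d A A * tinner d B B"
    unfolding tinner_def power2_eq_square[symmetric] by (rule Cauchy_Schwarz_ineq_sum)
  then have "sqrt ((tinner d A B)\<^sup>2) \<le> sqrt (tinner d A A * tinner d B B)"
    by (rule real_sqrt_le_mono)
  then show ?thesis by (simp add: hs_norm_def real_sqrt_mult)
qed

text \<open>In the equality case of Cauchy--Schwarz the residual of the orthogonal projection
  onto \<open>B\<close> has norm zero.\<close>
lemma abs_tinner_eq_hs_norm_imp_proportional:
  assumes B: "tinner d B B \<noteq> 0" and eq: "\<bar>tinner d A B\<bar> = hs_norm d A * hs_norm d B"
  shows "\<forall>ks\<in>idx d. A ks = (tinner d A B / tinner d B B) * B ks"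
proof -
  define c where "c = tinner d A B / tinner d B B"
  have pos: "tinner d B B > 0" using B tinner_self_nonneg[of d B] by linarith
  have "(tinner d A B)\<^sup>2 = (hs_norm d A * hs_norm d B)\<^sup>2" using eq by (metis power2_abs)
  also have "\<dots> = tinner d A A * tinner d B B"
    by (simp add: hs_norm_def power_mult_distrib tinner_self_nonneg)
  finally have "tinner d A A - 2 * c * tinner d A B + c\<^sup>2 * tinner d B B = 0"
    unfolding c_def using pos by (simp add: field_simps power2_eq_square)
  then show ?thesis
    unfolding c_def[symmetric] tinner_expand[symmetric] tinner_self_eq_0_iff by simp
qed

section \<open>Multilinear forms and the spectral norm\<close>

definition prod_entries :: "nat \<Rightarrow> (nat \<Rightarrow> real^'n::finite) \<Rightarrow> 'n list \<Rightarrow> real" where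
  "prod_entries d f ks = (\<Prod>j<d. f j $ (ks ! j))"

definition mlform :: "('n::finite list \<Rightarrow> real) \<Rightarrow> nat \<Rightarrow> (nat \<Rightarrow> real^'n) \<Rightarrow> real" where
  "mlform T d f = (\<Sum>ks\<in>idx d. T ks * prod_entries d f ks)"

lemma tinner_tprod_eq_mlform: "tinner d T (tprod (map f [0..<d])) = mlform T d f"
  unfolding tinner_def mlform_def
  by (rule sum.cong) (auto simp: tprod_def prod_entries_def intro!: prod.cong)

lemma tinner_tpow_eq_mlform: "tinner d T (tpow d x) = mlform T d (\<lambda>_. x)"
  by (simp add: tpow_def map_replicate_const tinner_tprod_eq_mlform[symmetric])

lemma mlform_cong: "(\<And>j. j < d \<Longrightarrow> f j = g j) \<Longrightarrow> mlform T d f = mlform T d g"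
  unfolding mlform_def prod_entries_def by (intro sum.cong prod.cong) auto

lemma abs_mlform_le:
  assumes "\<And>j. j < d \<Longrightarrow> norm (f j) \<le> 1"
  shows "\<bar>mlform T d f\<bar> \<le> (\<Sum>ks\<in>idx d. \<bar>T ks\<bar>)"
proof -
  have "\<bar>prod_entries d f ks\<bar> \<le> 1" for ks
    unfolding prod_entries_def abs_prod
    by (rule prod_le_1) (meson assms component_le_norm_cart abs_ge_zero lessThan_iff order_trans)
  then have "\<bar>T ks * prod_entries d f ks\<bar> \<le> \<bar>T ks\<bar>" for ks
    by (simp add: abs_mult mult_left_le)
  then show ?thesis
    unfolding mlform_def by (intro order_trans[OF sum_abs] sum_mono)
qed

lemma spec_norm_eq_Sup_mlform:
  "spec_norm d T = Sup {\<bar>mlform T d f\<bar> | f. \<forall>j<d. norm (f j) = 1}"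
proof -
  have "{\<bar>tinner d T (tprod xs)\<bar> | xs. length xs = d \<and> (\<forall>x\<in>set xs. norm x = 1)}
      = {\<bar>mlform T d f\<bar> | f. \<forall>j<d. norm (f j) = 1}"
  proof (intro set_eqI iffI)
    fix r assume "r \<in> {\<bar>tinner d T (tprod xs)\<bar> | xs. length xs = d \<and> (\<forall>x\<in>set xs. norm x = 1)}"
    then obtain xs where xs: "r = \<bar>tinner d T (tprod xs)\<bar>" "length xs = d" "\<forall>x\<in>set xs. norm x = 1"
      by auto
    then have "r = \<bar>mlform T d ((!) xs)\<bar>"
      by (metis map_nth tinner_tprod_eq_mlform)
    moreover have "\<forall>j<d. norm (xs ! j) = 1" using xs by auto
    ultimately show "r \<in> {\<bar>mlform T d f\<bar> | f. \<forall>j<d. norm (f j) = 1}" by blast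
  next
    fix r assume "r \<in> {\<bar>mlform T d f\<bar> | f. \<forall>j<d. norm (f j) = 1}"
    then obtain f where "r = \<bar>mlform T d f\<bar>" "\<forall>j<d. norm (f j) = 1" by auto
    then show "r \<in> {\<bar>tinner d T (tprod xs)\<bar> | xs. length xs = d \<and> (\<forall>x\<in>set xs. norm x = 1)}"
      by (intro CollectI exI[of _ "map f [0..<d]"]) (auto simp: tinner_tprod_eq_mlform)
  qed
  then show ?thesis unfolding spec_norm_def by simp
qed

lemma spec_norm_upper:
  assumes "\<And>j. j < d \<Longrightarrow> norm (f j) = 1"
  shows "\<bar>mlform T d f\<bar> \<le> spec_norm d T"
  unfolding spec_norm_eq_Sup_mlform
proof (rule cSup_upper)
  show "bdd_above {\<bar>mlform T d f\<bar> | f. \<forall>j<d. norm (f j) = 1}"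
    by (rule bdd_aboveI[of _ "\<Sum>ks\<in>idx d. \<bar>T ks\<bar>"]) (auto intro!: abs_mlform_le)
qed (use assms in auto)

lemma spec_norm_least:
  assumes "\<And>f. \<forall>j<d. norm (f j) = 1 \<Longrightarrow> \<bar>mlform T d f\<bar> \<le> M"
  shows "spec_norm d T \<le> M"
  unfolding spec_norm_eq_Sup_mlform
  by (rule cSup_least) (auto intro!: assms exI[of _ "\<lambda>_. axis undefined 1"])

lemma abs_tinner_tpow_le_spec_norm: "norm x = 1 \<Longrightarrow> \<bar>tinner d T (tpow d x)\<bar> \<le> spec_norm d T"
  by (simp add: tinner_tpow_eq_mlform spec_norm_upper)

section \<open>Symmetrization\<close>

lemma length_perm_idx [simp]: "length (perm_idx \<sigma> ks) = length ks"
  by (simp add: perm_idx_def)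

lemma nth_perm_idx [simp]: "j < length ks \<Longrightarrow> perm_idx \<sigma> ks ! j = ks ! \<sigma> j"
  by (simp add: perm_idx_def)

lemma perm_idx_id: "perm_idx id ks = ks"
  by (intro nth_equalityI) auto

lemma perm_idx_perm_idx:
  assumes "\<sigma> permutes {..<length ks}"
  shows "perm_idx \<sigma> (perm_idx \<tau> ks) = perm_idx (\<tau> \<circ> \<sigma>) ks"
proof -
  have "\<sigma> j < length ks" if "j < length ks" for j
    using permutes_in_image[OF assms] that by auto
  then show ?thesis by (intro nth_equalityI) auto
qed

lemma perm_idx_inv_perm_idx:
  assumes "\<sigma> permutes {..<length ks}"
  shows "perm_idx \<sigma> (perm_idx (inv \<sigma>) ks) = ks" and "perm_idx (inv \<sigma>) (perm_idx \<sigma> ks) = ks"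
  using perm_idx_perm_idx[OF assms] perm_idx_perm_idx[OF permutes_inv[OF assms]]
    permutes_inv_o[OF assms] perm_idx_id by metis+

lemma perm_idx_transpose:
  assumes "i < length ks" "j < length ks"
  shows "perm_idx (Transposition.transpose i j) ks = ks[i := ks ! j, j := ks ! i]"
  using assms by (intro nth_equalityI) (auto simp: Transposition.transpose_def nth_list_update)

lemma sum_idx_perm_idx:
  assumes "\<sigma> permutes {..<d}"
  shows "(\<Sum>ks\<in>idx d. h (perm_idx \<sigma> ks)) = (\<Sum>ks\<in>idx d. h ks)"
proof -
  have "bij_betw (perm_idx \<sigma>) (idx d) (idx d)"
    by (rule bij_betw_byWitness[where f'="perm_idx (inv \<sigma>)"])
      (use assms perm_idx_inv_perm_idx in auto)
  then show ?thesis by (rule sum.reindex_bij_betw)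
qed

lemma symmetric_tensor_perm_idx:
  "symmetric_tensor d T \<Longrightarrow> \<sigma> permutes {..<d} \<Longrightarrow> T (perm_idx \<sigma> ks) = T ks"
  unfolding symmetric_tensor_def is_tensor_def by (cases "length ks = d") auto

lemma symmetric_tensor_swap:
  assumes "symmetric_tensor d T" "length ks = d" "i < d" "j < d"
  shows "T (ks[i := ks ! j, j := ks ! i]) = T ks"
proof -
  have "Transposition.transpose i j permutes {..<d}"
    using assms by (intro permutes_swap_id) auto
  then show ?thesis
    using assms symmetric_tensor_perm_idx perm_idx_transpose by metis
qed

lemma prod_entries_comp_permutation:
  assumes "\<sigma> permutes {..<d}" "length ks = d"
  shows "prod_entries d (f \<circ> \<sigma>) ks = prod_entries d f (perm_idx (inv \<sigma>) ks)"
proof -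
  have "prod_entries d (f \<circ> \<sigma>) ks = (\<Prod>j<d. (\<lambda>k. f k $ (ks ! inv \<sigma> k)) (\<sigma> j))"
    unfolding prod_entries_def by (simp add: permutes_inverses(2)[OF assms(1)])
  also have "\<dots> = (\<Prod>k<d. f k $ (ks ! inv \<sigma> k))"
    using permutes_imp_bij[OF assms(1)] by (rule prod.reindex_bij_betw)
  also have "\<dots> = prod_entries d f (perm_idx (inv \<sigma>) ks)"
    unfolding prod_entries_def using assms(2) by (intro prod.cong) auto
  finally show ?thesis .
qed

lemma mlform_comp_permutation:
  assumes "\<sigma> permutes {..<d}"
  shows "mlform T d (f \<circ> \<sigma>) = mlform (\<lambda>ks. T (perm_idx \<sigma> ks)) d f"
proof -
  have "mlform T d (f \<circ> \<sigma>) = (\<Sum>ks\<in>idx d. T ks * prod_entries d f (perm_idx (inv \<sigma>) ks))"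
    unfolding mlform_def using prod_entries_comp_permutation[OF assms] by (intro sum.cong) auto
  also have "\<dots> = (\<Sum>ks\<in>idx d. T (perm_idx \<sigma> ks) * prod_entries d f (perm_idx (inv \<sigma>) (perm_idx \<sigma> ks)))"
    using sum_idx_perm_idx[OF assms, of "\<lambda>ks. T ks * prod_entries d f (perm_idx (inv \<sigma>) ks)"] by simp
  also have "\<dots> = mlform (\<lambda>ks. T (perm_idx \<sigma> ks)) d f"
    unfolding mlform_def using assms by (intro sum.cong refl) (simp add: perm_idx_inv_perm_idx)
  finally show ?thesis .
qed

lemma mlform_symmetric_comp_permutation:
  assumes "symmetric_tensor d S" "\<sigma> permutes {..<d}"
  shows "mlform S d (f \<circ> \<sigma>) = mlform S d f"
  unfolding mlform_comp_permutation[OF assms(2)] symmetric_tensor_perm_idx[OF assms] ..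

lemma mlform_symmetric_swap:
  assumes "symmetric_tensor d S" "i < d" "j < d" "i \<noteq> j"
  shows "mlform S d (f(i := u, j := w)) = mlform S d (f(i := w, j := u))"
proof -
  have "Transposition.transpose i j permutes {..<d}"
    using assms by (intro permutes_swap_id) auto
  moreover have "f(i := w, j := u) \<circ> Transposition.transpose i j = f(i := u, j := w)"
    using assms(4) by (auto simp: fun_eq_iff Transposition.transpose_def)
  ultimately show ?thesis
    using mlform_symmetric_comp_permutation[OF assms(1)] by metis
qed

lemma mlform_tsym:
  "mlform (tsym d T) d f = (1 / fact d) * (\<Sum>\<sigma>\<in>{\<sigma>. \<sigma> permutes {..<d}}. mlform T d (f \<circ> \<sigma>))"
proof -
  let ?P = "{\<sigma>. \<sigma> permutes {..<d}}"
  have "mlform (tsym d T) d f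
      = (\<Sum>ks\<in>idx d. (1 / fact d) * (\<Sum>\<sigma>\<in>?P. T (perm_idx \<sigma> ks) * prod_entries d f ks))"
    unfolding mlform_def tsym_def by (intro sum.cong) (auto simp: sum_distrib_right)
  also have "\<dots> = (1 / fact d) * (\<Sum>\<sigma>\<in>?P. \<Sum>ks\<in>idx d. T (perm_idx \<sigma> ks) * prod_entries d f ks)"
    by (simp add: sum_divide_distrib[symmetric] sum.swap[of _ "idx d"])
  also have "\<dots> = (1 / fact d) * (\<Sum>\<sigma>\<in>?P. mlform T d (f \<circ> \<sigma>))"
    by (intro arg_cong[where f="(*) _"] sum.cong) (simp_all add: mlform_comp_permutation[unfolded mlform_def] mlform_def)
  finally show ?thesis .
qed

lemma tinner_tsym_left: "tinner d (tsym d T) S = tinner d T (tsym d S)"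
proof -
  let ?P = "{\<sigma>. \<sigma> permutes {..<d}}"
  have inverse_reindex:
    "(\<Sum>ks\<in>idx d. T (perm_idx \<sigma> ks) * S ks) = (\<Sum>ks\<in>idx d. T ks * S (perm_idx (inv \<sigma>) ks))"
    if "\<sigma> \<in> ?P" for \<sigma>
  proof -
    have "inv \<sigma> permutes {..<d}" using that permutes_inv by blast
    from sum_idx_perm_idx[OF this, of "\<lambda>ks. T (perm_idx \<sigma> ks) * S ks"]
    have "(\<Sum>ks\<in>idx d. T (perm_idx \<sigma> ks) * S ks)
        = (\<Sum>ks\<in>idx d. T (perm_idx \<sigma> (perm_idx (inv \<sigma>) ks)) * S (perm_idx (inv \<sigma>) ks))"
      by simp
    also have "\<dots> = (\<Sum>ks\<in>idx d. T ks * S (perm_idx (inv \<sigma>) ks))"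
      using that by (intro sum.cong refl) (simp add: perm_idx_inv_perm_idx)
    finally show ?thesis .
  qed
  have "tinner d (tsym d T) S = (1 / fact d) * (\<Sum>\<sigma>\<in>?P. \<Sum>ks\<in>idx d. T (perm_idx \<sigma> ks) * S ks)"
    unfolding tinner_def tsym_def
    by (simp add: sum_distrib_right sum_distrib_left sum.swap[of _ "idx d"] mult.assoc)
  also have "\<dots> = (1 / fact d) * (\<Sum>\<sigma>\<in>?P. \<Sum>ks\<in>idx d. T ks * S (perm_idx (inv \<sigma>) ks))"
    using inverse_reindex by simp
  also have "\<dots> = (1 / fact d) * (\<Sum>\<sigma>\<in>?P. \<Sum>ks\<in>idx d. T ks * S (perm_idx \<sigma> ks))"
    using sum_permutations_inverse[of "\<lambda>\<sigma>. \<Sum>ks\<in>idx d. T ks * S (perm_idx \<sigma> ks)"] by simp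
  also have "\<dots> = tinner d T (tsym d S)"
    unfolding tinner_def tsym_def
    by (simp add: sum_distrib_right sum_distrib_left sum.swap[of _ "idx d"] mult_ac)
  finally show ?thesis .
qed

lemma symmetric_tensor_tsym: "symmetric_tensor d (tsym d T)"
  unfolding symmetric_tensor_def is_tensor_def
proof (intro conjI allI impI)
  fix ks :: "'a list" and \<tau> assume l: "length ks = d" and \<tau>: "\<tau> permutes {..<d}"
  have "(\<Sum>\<sigma>\<in>{\<sigma>. \<sigma> permutes {..<d}}. T (perm_idx \<sigma> (perm_idx \<tau> ks))) =
        (\<Sum>\<sigma>\<in>{\<sigma>. \<sigma> permutes {..<d}}. T (perm_idx (\<tau> \<circ> \<sigma>) ks))"
    using l by (intro sum.cong refl) (simp add: perm_idx_perm_idx)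
  also have "\<dots> = (\<Sum>\<sigma>\<in>{\<sigma>. \<sigma> permutes {..<d}}. T (perm_idx \<sigma> ks))"
    using setum_permutations_compose_left[OF \<tau>, of "\<lambda>\<sigma>. T (perm_idx \<sigma> ks)"] by simp
  finally show "tsym d T (perm_idx \<tau> ks) = tsym d T ks"
    unfolding tsym_def using l by simp
qed (simp add: tsym_def)

lemma tsym_eq_self:
  assumes "symmetric_tensor d S"
  shows "tsym d S = S"
proof (rule tensor_eqI)
  show "is_tensor d (tsym d S)" "is_tensor d S"
    using assms symmetric_tensor_tsym unfolding symmetric_tensor_def by blast+
next
  fix ks :: "'a list" assume l: "length ks = d"
  have "(\<Sum>\<sigma>\<in>{\<sigma>. \<sigma> permutes {..<d}}. S (perm_idx \<sigma> ks)) = (\<Sum>\<sigma>\<in>{\<sigma>. \<sigma> permutes {..<d}}. S ks)"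
    using assms symmetric_tensor_perm_idx by (intro sum.cong) auto
  then show "tsym d S ks = S ks"
    unfolding tsym_def using l card_permutations[of "{..<d}" d] by simp
qed

lemma symmetric_tensor_tpow: "symmetric_tensor d (tpow d x)"
  unfolding symmetric_tensor_def
proof (intro conjI allI impI is_tensor_tpow)
  fix ks :: "'a list" and \<sigma> assume l: "length ks = d" and \<sigma>: "\<sigma> permutes {..<d}"
  have "(\<Prod>j<d. x $ (ks ! \<sigma> j)) = (\<Prod>j<d. x $ (ks ! j))"
    using prod.reindex_bij_betw[OF permutes_imp_bij[OF \<sigma>], of "\<lambda>j. x $ (ks ! j)"] by simp
  then show "tpow d x (perm_idx \<sigma> ks) = tpow d x ks"
    using l by (simp add: tpow_apply)
qed

lemma tinner_tsym_tpow: "tinner d (tsym d T) (tpow d x) = tinner d T (tpow d x)"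
  by (simp add: tinner_tsym_left tsym_eq_self[OF symmetric_tensor_tpow])

lemma hs_norm_tsym:
  assumes T: "is_tensor d T"
  shows "hs_norm d (tsym d T) \<le> hs_norm d T \<and> (hs_norm d (tsym d T) = hs_norm d T \<longleftrightarrow> tsym d T = T)"
proof -
  let ?S = "tsym d T" and ?R = "\<lambda>ks. T ks - 1 * tsym d T ks"
  have "tinner d ?S T = tinner d ?S ?S"
    by (metis tinner_tsym_left tsym_eq_self[OF symmetric_tensor_tsym] tinner_commute)
  then have split: "tinner d T T = tinner d ?S ?S + tinner d ?R ?R"
    using tinner_expand[of d T 1 ?S] tinner_commute[of d T ?S] by simp
  then have "hs_norm d ?S \<le> hs_norm d T"
    unfolding hs_norm_def using tinner_self_nonneg[of d ?R] by simp
  moreover have "hs_norm d ?S = hs_norm d T \<longleftrightarrow> tinner d ?R ?R = 0"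
    unfolding hs_norm_def using split tinner_self_nonneg[of d ?S] tinner_self_nonneg[of d ?R]
    by (auto simp: real_sqrt_eq_iff)
  moreover have "tinner d ?R ?R = 0 \<longleftrightarrow> ?S = T"
    unfolding tinner_self_eq_0_iff using T symmetric_tensor_tsym[of d T]
    by (auto intro: tensor_eqI[symmetric] simp: symmetric_tensor_def)
  ultimately show ?thesis by simp
qed

lemma spec_norm_tsym_le: "spec_norm d (tsym d T) \<le> spec_norm d T"
proof (rule spec_norm_least)
  fix f :: "nat \<Rightarrow> real^'a" assume f: "\<forall>j<d. norm (f j) = 1"
  let ?P = "{\<sigma>. \<sigma> permutes {..<d}}"
  have "\<bar>mlform T d (f \<circ> \<sigma>)\<bar> \<le> spec_norm d T" if "\<sigma> \<in> ?P" for \<sigma>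
    using f permutes_in_image[of \<sigma> "{..<d}"] that by (intro spec_norm_upper) auto
  then have "(\<Sum>\<sigma>\<in>?P. \<bar>mlform T d (f \<circ> \<sigma>)\<bar>) \<le> fact d * spec_norm d T"
    using sum_mono[of ?P _ "\<lambda>_. spec_norm d T"] card_permutations[of "{..<d}" d] by simp
  then have "\<bar>\<Sum>\<sigma>\<in>?P. mlform T d (f \<circ> \<sigma>)\<bar> \<le> fact d * spec_norm d T"
    by (rule order_trans[OF sum_abs])
  then show "\<bar>mlform (tsym d T) d f\<bar> \<le> spec_norm d T"
    by (simp add: mlform_tsym abs_mult field_simps)
qed

section \<open>Polarization\<close>

lemma prod_entries_fun_upd:
  assumes "i < d"
  shows "prod_entries d (f(i := u)) ks = u $ (ks ! i) * (\<Prod>j\<in>{..<d}-{i}. f j $ (ks ! j))"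
proof -
  have "prod_entries d (f(i := u)) ks = (f(i := u)) i $ (ks ! i) * (\<Prod>j\<in>{..<d}-{i}. (f(i := u)) j $ (ks ! j))"
    unfolding prod_entries_def using assms by (intro prod.remove) auto
  also have "(\<Prod>j\<in>{..<d}-{i}. (f(i := u)) j $ (ks ! j)) = (\<Prod>j\<in>{..<d}-{i}. f j $ (ks ! j))"
    by (intro prod.cong) auto
  finally show ?thesis by (simp only: fun_upd_same)
qed

definition slot_vector :: "('n::finite list \<Rightarrow> real) \<Rightarrow> nat \<Rightarrow> (nat \<Rightarrow> real^'n) \<Rightarrow> nat \<Rightarrow> real^'n" where
  "slot_vector T d f i = (\<chi> k. mlform T d (f(i := axis k 1)))"

lemma mlform_fun_upd:
  assumes "i < d"
  shows "mlform T d (f(i := u)) = u \<bullet> slot_vector T d f i"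
proof -
  define R where "R ks = T ks * (\<Prod>j\<in>{..<d}-{i}. f j $ (ks ! j))" for ks
  have upd: "mlform T d (f(i := v)) = (\<Sum>ks\<in>idx d. v $ (ks ! i) * R ks)" for v
    unfolding mlform_def R_def prod_entries_fun_upd[OF assms] by (simp add: mult_ac)
  have "u \<bullet> slot_vector T d f i = (\<Sum>k\<in>UNIV. \<Sum>ks\<in>idx d. u $ k * axis k 1 $ (ks ! i) * R ks)"
    by (simp add: slot_vector_def inner_vec_def upd sum_distrib_left mult_ac)
  also have "\<dots> = (\<Sum>ks\<in>idx d. (\<Sum>k\<in>UNIV. u $ k * axis k 1 $ (ks ! i)) * R ks)"
    by (subst sum.swap) (simp add: sum_distrib_right)
  also have "\<dots> = mlform T d (f(i := u))"
    by (simp add: upd axis_def if_distrib[of "(*) _"] cong: if_cong)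
  finally show ?thesis by simp
qed

lemma mlform_fun_upd_zero: "i < d \<Longrightarrow> mlform T d (f(i := 0)) = 0"
  by (simp add: mlform_fun_upd)

lemma mlform_fun_upd_linear:
  assumes "i < d"
  shows "mlform T d (f(i := a *\<^sub>R u + b *\<^sub>R v)) = a * mlform T d (f(i := u)) + b * mlform T d (f(i := v))"
  unfolding mlform_fun_upd[OF assms] by (simp add: inner_add_left)

lemma has_field_derivative_mlform_line:
  "((\<lambda>t. mlform H d (\<lambda>j. f j + t *\<^sub>R v j)) has_field_derivative (\<Sum>j<d. mlform H d (f(j := v j)))) (at 0)"
proof -
  have factor: "((\<lambda>t. prod_entries d (\<lambda>j. f j + t *\<^sub>R v j) ks) has_field_derivative
           (\<Sum>j<d. prod_entries d (f(j := v j)) ks)) (at 0)" for ks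
  proof -
    have "((\<lambda>t. \<Prod>j<d. f j $ (ks ! j) + t * v j $ (ks ! j)) has_field_derivative
           (\<Sum>j<d. v j $ (ks ! j) * (\<Prod>l\<in>{..<d}-{j}. f l $ (ks ! l) + 0 * v l $ (ks ! l)))) (at 0)"
      by (rule has_field_derivative_prod) (auto intro!: derivative_eq_intros)
    moreover have "(\<Sum>j<d. prod_entries d (f(j := v j)) ks)
        = (\<Sum>j<d. v j $ (ks ! j) * (\<Prod>l\<in>{..<d}-{j}. f l $ (ks ! l)))"
      by (intro sum.cong refl) (simp add: prod_entries_fun_upd)
    ultimately show ?thesis
      by (simp add: prod_entries_def)
  qed
  have "((\<lambda>t. mlform H d (\<lambda>j. f j + t *\<^sub>R v j)) has_field_derivative
           (\<Sum>ks\<in>idx d. H ks * (\<Sum>j<d. prod_entries d (f(j := v j)) ks))) (at 0)"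
    unfolding mlform_def by (intro DERIV_sum DERIV_cmult factor)
  moreover have "(\<Sum>ks\<in>idx d. H ks * (\<Sum>j<d. prod_entries d (f(j := v j)) ks))
      = (\<Sum>j<d. mlform H d (f(j := v j)))"
    unfolding mlform_def sum_distrib_left by (rule sum.swap)
  ultimately show ?thesis by simp
qed

text \<open>Differentiating \<open>t \<mapsto> H(g\<^sub>0,\<dots>,g\<^sub>k\<^sub>-\<^sub>1, x + t y, \<dots>, x + t y)\<close> at \<open>0\<close>
  replaces the \<open>x\<close>'s one at a time by \<open>y\<close>; by symmetry all \<open>d - k\<close> terms agree.\<close>
lemma symmetric_mlform_vanishing_step:
  assumes H: "symmetric_tensor d H" and k: "k < d"
    and line: "\<And>t. mlform H d (\<lambda>j. if j < k then g j else x + t *\<^sub>R y) = 0"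
  shows "mlform H d (\<lambda>j. if j < k then g j else if j = k then y else x) = 0"
proof -
  define h where "h = (\<lambda>j. if j < k then g j else x)"
  define v where "v = (\<lambda>j. if j < k then 0 else y)"
  define M where "M = mlform H d (h(k := y))"
  have "(\<lambda>t. mlform H d (\<lambda>j. h j + t *\<^sub>R v j)) = (\<lambda>t. 0)"
    using line by (simp add: h_def v_def if_distrib cong: if_cong)
  then have "(\<Sum>j<d. mlform H d (h(j := v j))) = 0"
    using has_field_derivative_mlform_line[of H d h v]
    by (metis DERIV_const DERIV_unique)
  moreover have slot: "mlform H d (h(j := v j)) = (if j < k then 0 else M)" if "j < d" for j
  proof (cases "j < k \<or> j = k")
    case False
    then have "mlform H d (h(k := x, j := y)) = mlform H d (h(k := y, j := x))"
      using H k that by (intro mlform_symmetric_swap) auto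
    moreover have "h(k := x, j := y) = h(j := y)" "h(k := y, j := x) = h(k := y)"
      using False by (auto simp: h_def)
    ultimately show ?thesis using False by (simp add: v_def M_def)
  next
    case True
    show ?thesis
    proof (cases "j < k")
      case True
      then show ?thesis using that by (simp add: v_def mlform_fun_upd_zero)
    next
      case False
      then show ?thesis using \<open>j < k \<or> j = k\<close> by (simp add: v_def M_def)
    qed
  qed
  moreover have "(\<Sum>j<d. mlform H d (h(j := v j))) = (\<Sum>j<d. if j < k then 0 else M)"
    using slot by (intro sum.cong) auto
  moreover have "(\<Sum>j<d. if j < k then 0 else M) = (\<Sum>j\<in>{k..<d}. M)"
    by (rule sum.mono_neutral_cong_right) auto
  ultimately have "M = 0" using k by simp
  moreover have "(\<lambda>j. if j < k then g j else if j = k then y else x) = h(k := y)"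
    by (auto simp: h_def)
  ultimately show ?thesis by (simp only: M_def)
qed

lemma symmetric_mlform_eq_0:
  assumes H: "symmetric_tensor d H" and diag: "\<And>x. mlform H d (\<lambda>_. x) = 0"
  shows "mlform H d g = 0"
proof -
  have "mlform H d (\<lambda>j. if j < k then g j else x) = 0" if "k \<le> d" for k x
    using that
  proof (induction k arbitrary: x)
    case (Suc k)
    have "(\<lambda>j. if j < Suc k then g j else x) = (\<lambda>j. if j < k then g j else if j = k then g k else x)"
      by (auto simp: fun_eq_iff less_Suc_eq)
    show ?case
      unfolding \<open>(\<lambda>j. if j < Suc k then g j else x) = _\<close>
      by (rule symmetric_mlform_vanishing_step[OF H]) (use Suc in auto)
  qed (simp add: diag)
  moreover have "mlform H d (\<lambda>j. if j < d then g j else g 0) = mlform H d g"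
    by (rule mlform_cong) simp
  ultimately show ?thesis by (metis order_refl)
qed

lemma mlform_axis:
  assumes "length ks = d"
  shows "mlform T d (\<lambda>j. axis (ks ! j) 1) = T ks"
proof -
  have "prod_entries d (\<lambda>j. axis (ks ! j) 1) js = (if js = ks then 1 else 0)" if js: "length js = d" for js
  proof (cases "js = ks")
    case False
    then obtain j where "j < d" "js ! j \<noteq> ks ! j"
      using assms js by (auto simp: list_eq_iff_nth_eq)
    then show ?thesis
      unfolding prod_entries_def using False by (subst prod_zero) (auto simp: axis_def)
  qed (simp add: prod_entries_def axis_def)
  then have "mlform T d (\<lambda>j. axis (ks ! j) 1) = (\<Sum>js\<in>idx d. if js = ks then T js else 0)"
    unfolding mlform_def by (intro sum.cong) auto
  then show ?thesis using assms by (simp add: sum.delta')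
qed

lemma symmetric_tensor_eq_0:
  assumes H: "symmetric_tensor d H" and diag: "\<And>x. tinner d H (tpow d x) = 0"
  shows "H = (\<lambda>_. 0)"
proof (rule tensor_eqI)
  show "is_tensor d H" using H by (simp add: symmetric_tensor_def)
  fix ks :: "'a list" assume "length ks = d"
  then have "H ks = mlform H d (\<lambda>j. axis (ks ! j) 1)"
    by (simp add: mlform_axis)
  also have "\<dots> = 0"
    by (rule symmetric_mlform_eq_0[OF H]) (use diag in \<open>simp add: tinner_tpow_eq_mlform\<close>)
  finally show "H ks = 0" .
qed (simp add: is_tensor_def)

lemma symmetric_tensor_eqI:
  assumes A: "symmetric_tensor d A" and B: "symmetric_tensor d B"
    and diag: "\<And>x. tinner d A (tpow d x) = tinner d B (tpow d x)"
  shows "A = B"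
proof -
  have "symmetric_tensor d (\<lambda>ks. A ks - B ks)"
    using A B by (simp add: symmetric_tensor_def is_tensor_def)
  then have "(\<lambda>ks. A ks - B ks) = (\<lambda>_. 0)"
    by (rule symmetric_tensor_eq_0) (simp add: tinner_diff_left diag)
  then show ?thesis by (simp add: fun_eq_iff)
qed

section \<open>Tensor products and tensor powers\<close>

lemma sum_idx_add: "(\<Sum>ks\<in>idx (p + q). h ks) = (\<Sum>a\<in>idx p. \<Sum>b\<in>idx q. h (a @ b))"
proof -
  have "bij_betw (\<lambda>(a, b). a @ b) (idx p \<times> idx q) (idx (p + q))"
    by (rule bij_betw_byWitness[where f'="\<lambda>ks. (take p ks, drop p ks)"]) auto
  then have "(\<Sum>x\<in>idx p \<times> idx q. h ((\<lambda>(a, b). a @ b) x)) = (\<Sum>ks\<in>idx (p + q). h ks)"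
    by (rule sum.reindex_bij_betw)
  then show ?thesis by (simp add: sum.cartesian_product case_prod_beta)
qed

lemma tinner_ttensor: "tinner (p + q) (ttensor p q A B) (ttensor p q C D) = tinner p A C * tinner q B D"
  unfolding tinner_def sum_idx_add sum_product by (intro sum.cong refl) (simp add: ttensor_def)

lemma hs_norm_ttensor: "hs_norm (p + q) (ttensor p q A B) = hs_norm p A * hs_norm q B"
  unfolding hs_norm_def tinner_ttensor by (simp add: real_sqrt_mult)

lemma is_tensor_ttensor: "is_tensor (p + q) (ttensor p q A B)"
  by (simp add: is_tensor_def ttensor_def)

lemma tpow_add: "tpow (p + q) x = ttensor p q (tpow p x) (tpow q x)"
proof
  fix ks :: "'a list"
  have "(\<Prod>j<p + q. x $ (ks ! j)) = (\<Prod>j\<in>{0..<p}. x $ (ks ! j)) * (\<Prod>j\<in>{p..<p + q}. x $ (ks ! j))"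
    by (simp add: prod.atLeastLessThan_concat atLeast0LessThan[symmetric])
  also have "(\<Prod>j\<in>{p..<p + q}. x $ (ks ! j)) = (\<Prod>j<q. x $ (ks ! (p + j)))"
    using prod.shift_bounds_nat_ivl[of "\<lambda>j. x $ (ks ! j)" 0 p q] by (simp add: atLeast0LessThan add.commute)
  finally have "(\<Prod>j<p + q. x $ (ks ! j)) = (\<Prod>j<p. x $ (ks ! j)) * (\<Prod>j<q. x $ (ks ! (p + j)))"
    by (simp add: atLeast0LessThan)
  then show "tpow (p + q) x ks = ttensor p q (tpow p x) (tpow q x) ks"
    by (simp add: tpow_apply ttensor_def nth_drop)
qed

lemma tinner_tpow_tpow: "tinner p (tpow p c) (tpow p x) = (c \<bullet> x) ^ p"
proof (induction p)
  case 0
  have idx0: "idx 0 = {[]}" by (auto simp: idx_def)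
  show ?case unfolding tinner_def idx0 by (simp add: tpow_apply)
next
  case (Suc p)
  have idx1: "idx 1 = (\<lambda>a. [a]) ` UNIV"
    by (auto simp: idx_def length_Suc_conv)
  have "tinner 1 (tpow 1 c) (tpow 1 x) = c \<bullet> x"
    unfolding tinner_def idx1 by (subst sum.reindex) (auto simp: inj_on_def tpow_apply inner_vec_def)
  then have "tinner (1 + p) (tpow (1 + p) c) (tpow (1 + p) x) = (c \<bullet> x) * (c \<bullet> x) ^ p"
    unfolding tpow_add tinner_ttensor Suc.IH by simp
  then show ?case by simp
qed

lemma hs_norm_tpow: "hs_norm p (tpow p c) = norm c ^ p"
  unfolding hs_norm_def tinner_tpow_tpow by (simp add: norm_eq_sqrt_inner real_sqrt_power)

lemma tinner_tsym_ttensor_tpow: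
  "tinner (p + q) (tsym (p + q) (ttensor p q F G)) (tpow (p + q) x)
     = tinner p F (tpow p x) * tinner q G (tpow q x)"
  by (simp only: tinner_tsym_tpow) (simp add: tpow_add tinner_ttensor)

lemma sym_tensor_prod_eq_tsym: "sym_tensor_prod p q F G = tsym (p + q) (ttensor p q F G)"
  unfolding sym_tensor_prod_def
  by (rule the_equality)
    (auto intro: symmetric_tensor_eqI simp: symmetric_tensor_tsym tinner_tsym_ttensor_tpow)

lemma poly_tensor_eqI:
  assumes "symmetric_tensor p F" "\<And>x. f x = tinner p F (tpow p x)"
  shows "poly_tensor p f = F"
  unfolding poly_tensor_def
  by (rule the_equality) (use assms in \<open>auto intro: symmetric_tensor_eqI\<close>)

lemma tinner_scaled_tpow: "tinner p (\<lambda>ks. a * tpow p c ks) (tpow p x) = a * (c \<bullet> x) ^ p"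
  by (simp add: tinner_scale_left tinner_tpow_tpow)

lemma symmetric_tensor_eq_scaled_tpow_iff:
  assumes "symmetric_tensor p F"
  shows "F = (\<lambda>ks. a * tpow p c ks) \<longleftrightarrow> (\<forall>x. tinner p F (tpow p x) = a * (c \<bullet> x) ^ p)"
proof
  assume eq: "\<forall>x. tinner p F (tpow p x) = a * (c \<bullet> x) ^ p"
  have "symmetric_tensor p (\<lambda>ks. a * tpow p c ks)"
    using symmetric_tensor_tpow[of p c] by (simp add: symmetric_tensor_def is_tensor_def)
  then show "F = (\<lambda>ks. a * tpow p c ks)"
    by (rule symmetric_tensor_eqI[OF assms]) (simp add: eq tinner_scaled_tpow)
qed (simp add: tinner_scaled_tpow)

lemma symmetric_tensor_eq_0_iff:
  assumes "symmetric_tensor p F"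
  shows "F = (\<lambda>_. 0) \<longleftrightarrow> (\<lambda>x. tinner p F (tpow p x)) = (\<lambda>_. 0)"
  using symmetric_tensor_eq_scaled_tpow_iff[OF assms, of 0] by (auto simp: fun_eq_iff)

lemma abs_tinner_tpow_le_hs_norm:
  assumes F: "symmetric_tensor p F"
  shows "\<bar>tinner p F (tpow p c)\<bar> \<le> hs_norm p F * norm c ^ p \<and>
    (c \<noteq> 0 \<longrightarrow> (\<bar>tinner p F (tpow p c)\<bar> = hs_norm p F * norm c ^ p \<longleftrightarrow>
        (\<exists>a. \<forall>x. tinner p F (tpow p x) = a * (c \<bullet> x) ^ p)))"
proof -
  have "\<bar>tinner p F (tpow p c)\<bar> = hs_norm p F * norm c ^ p \<longleftrightarrow> (\<exists>a. F = (\<lambda>ks. a * tpow p c ks))"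
    if "c \<noteq> 0"
  proof
    assume eq: "\<bar>tinner p F (tpow p c)\<bar> = hs_norm p F * norm c ^ p"
    have "tinner p (tpow p c) (tpow p c) \<noteq> 0" using that by (simp add: tinner_tpow_tpow)
    from abs_tinner_eq_hs_norm_imp_proportional[OF this] eq
    have "\<exists>a. \<forall>ks\<in>idx p. F ks = a * tpow p c ks"
      by (auto simp: hs_norm_tpow intro!: exI[of _ "tinner p F (tpow p c) / tinner p (tpow p c) (tpow p c)"])
    then show "\<exists>a. F = (\<lambda>ks. a * tpow p c ks)"
      using F is_tensor_tpow[of p c]
      by (metis (no_types, lifting) is_tensor_scale mem_idx symmetric_tensor_def tensor_eqI)
  next
    assume "\<exists>a. F = (\<lambda>ks. a * tpow p c ks)"
    then obtain a where "F = (\<lambda>ks. a * tpow p c ks)" by blast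
    then show "\<bar>tinner p F (tpow p c)\<bar> = hs_norm p F * norm c ^ p"
      by (simp add: tinner_scaled_tpow hs_norm_scale hs_norm_tpow abs_mult
          power2_norm_eq_inner[symmetric] power_mult[symmetric] mult.commute[of 2] power_add[symmetric] mult_2_right)
  qed
  then show ?thesis
    using abs_tinner_le_hs_norm[of p F "tpow p c"] symmetric_tensor_eq_scaled_tpow_iff[OF F]
    by (simp add: hs_norm_tpow)
qed

section \<open>Symmetric products of tensors\<close>

definition slices_parallel :: "nat \<Rightarrow> ('n::finite list \<Rightarrow> real) \<Rightarrow> real^'n \<Rightarrow> bool" where
  "slices_parallel m T v \<longleftrightarrow> (\<forall>r i k. length r = m - 1 \<longrightarrow> T (i # r) * v $ k = T (k # r) * v $ i)"

lemma slices_parallel_update: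
  assumes T: "symmetric_tensor m T" and par: "slices_parallel m T v"
    and ks: "length ks = m" and l: "l < m"
  shows "T (ks[l := i]) * v $ (ks ! l) = T ks * v $ i"
proof -
  have head: "T (xs[0 := i]) * v $ (xs ! 0) = T xs * v $ i" if "length xs = m" for xs
    using that l par unfolding slices_parallel_def by (cases xs) auto
  show ?thesis
  proof (cases "l = 0")
    case False
    define ks' where "ks' = ks[0 := ks ! l, l := ks ! 0]"
    have "T ks' = T ks" and "T (ks'[0 := i]) = T (ks[l := i])"
      using symmetric_tensor_swap[OF T, of ks 0 l] symmetric_tensor_swap[OF T, of "ks[l := i]" 0 l]
        ks l False by (simp_all add: ks'_def list_update_swap)
    moreover have "ks' ! 0 = ks ! l" using ks l by (simp add: ks'_def nth_list_update)
    ultimately show ?thesis using head[of ks'] ks by (simp add: ks'_def)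
  qed (use head ks in simp)
qed

lemma rank_one_if_slices_parallel:
  assumes T: "symmetric_tensor m T" and par: "slices_parallel m T v" and v: "v $ i0 \<noteq> 0"
  shows "T = (\<lambda>ks. (T (replicate m i0) / v $ i0 ^ m) * tpow m v ks)"
proof (rule tensor_eqI)
  show "is_tensor m T" using T by (simp add: symmetric_tensor_def)
  show "is_tensor m (\<lambda>ks. (T (replicate m i0) / v $ i0 ^ m) * tpow m v ks)"
    by (intro is_tensor_scale is_tensor_tpow)
next
  fix ks :: "'a list" assume ks: "length ks = m"
  have "T (take t ks @ replicate (m - t) i0) * v $ i0 ^ t = T (replicate m i0) * (\<Prod>j<t. v $ (ks ! j))"
    if "t \<le> m" for t
    using that
  proof (induction t)
    case (Suc t)
    let ?L = "take t ks @ replicate (m - t) i0"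
    have "replicate (m - t) i0 = i0 # replicate (m - Suc t) i0"
      using Suc.prems by (metis Suc_diff_Suc Suc_le_lessD replicate_Suc)
    then have "take (Suc t) ks @ replicate (m - Suc t) i0 = ?L[t := ks ! t]"
      using Suc.prems ks by (simp add: take_Suc_conv_app_nth list_update_append)
    moreover have "?L ! t = i0" using Suc.prems ks by (simp add: nth_append)
    moreover have "T (?L[t := ks ! t]) * v $ (?L ! t) = T ?L * v $ (ks ! t)"
      using Suc.prems ks by (intro slices_parallel_update[OF T par]) auto
    ultimately have "T (take (Suc t) ks @ replicate (m - Suc t) i0) * v $ i0 = T ?L * v $ (ks ! t)"
      by simp
    then have "T (take (Suc t) ks @ replicate (m - Suc t) i0) * v $ i0 ^ Suc t
        = (T ?L * v $ i0 ^ t) * v $ (ks ! t)"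
      by (simp add: algebra_simps)
    then show ?case using Suc by simp
  qed simp
  from this[of m] ks v show "T ks = T (replicate m i0) / v $ i0 ^ m * tpow m v ks"
    by (simp add: tpow_apply field_simps)
qed

lemma symmetric_ttensor_swap:
  assumes H: "symmetric_tensor (p + q) (ttensor p q F G)" and p: "p \<ge> 1"
    and r: "length r = p - 1" and s: "length s = q - 1" and q: "q \<ge> 1"
  shows "F (i # r) * G (j # s) = F (j # r) * G (i # s)"
proof -
  let ?ks = "(i # r) @ (j # s)"
  have "?ks[0 := ?ks ! p, p := ?ks ! 0] = (j # r) @ (i # s)"
    using p r by (cases p) (auto simp: list_update_append nth_append)
  then have "ttensor p q F G ((j # r) @ (i # s)) = ttensor p q F G ?ks"
    using symmetric_tensor_swap[OF H, of ?ks 0 p] p q r s by simp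
  then show ?thesis
    using p q r s by (simp add: ttensor_def del: append_Cons)
qed

lemma symmetric_ttensor_imp_rank_one:
  assumes F: "symmetric_tensor p F" and G: "symmetric_tensor q G"
    and p: "p \<ge> 1" and q: "q \<ge> 1"
    and F0: "F \<noteq> (\<lambda>_. 0)" and G0: "G \<noteq> (\<lambda>_. 0)"
    and H: "symmetric_tensor (p + q) (ttensor p q F G)"
  shows "\<exists>c a b. c \<noteq> 0 \<and> a \<noteq> 0 \<and> b \<noteq> 0 \<and> F = (\<lambda>ks. a * tpow p c ks) \<and> G = (\<lambda>ks. b * tpow q c ks)"
proof -
  obtain j0 s0 where G00: "G (j0 # s0) \<noteq> 0" and s0: "length s0 = q - 1"
  proof -
    obtain ks where "G ks \<noteq> 0" using G0 by auto
    moreover from this have "length ks = q" using G unfolding symmetric_tensor_def is_tensor_def by metis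
    ultimately show thesis using that q by (cases ks) auto
  qed
  define v where "v = (\<chi> i. G (i # s0))"
  have v0: "v $ j0 \<noteq> 0" using G00 by (simp add: v_def)
  have "slices_parallel p F v"
    unfolding slices_parallel_def v_def using symmetric_ttensor_swap[OF H p _ s0 q] by simp
  then obtain a where Fa: "F = (\<lambda>ks. a * tpow p v ks)"
    using rank_one_if_slices_parallel[OF F _ v0] by blast
  have a0: "a \<noteq> 0" using F0 Fa by auto
  have "slices_parallel q G v"
    unfolding slices_parallel_def
  proof (intro allI impI)
    fix s i k assume s: "length (s::'a list) = q - 1"
    let ?r = "replicate (p - 1) j0"
    have "tpow p v (x # ?r) = v $ x * v $ j0 ^ (p - 1)" for x
    proof -
      obtain p' where p': "p = Suc p'" using p by (cases p) auto
      have "(\<Prod>j<Suc p'. v $ ((x # replicate p' j0) ! j)) = v $ x * (\<Prod>j<p'. v $ ((x # replicate p' j0) ! Suc j))"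
        by (subst prod.lessThan_Suc_shift) simp
      then show ?thesis using p' by (simp add: tpow_apply)
    qed
    moreover have "F (i # ?r) * G (k # s) = F (k # ?r) * G (i # s)"
      using symmetric_ttensor_swap[OF H p _ s q] by simp
    ultimately have "(a * v $ j0 ^ (p - 1)) * (v $ i * G (k # s)) = (a * v $ j0 ^ (p - 1)) * (v $ k * G (i # s))"
      by (simp add: Fa mult_ac)
    then show "G (i # s) * v $ k = G (k # s) * v $ i"
      using a0 v0 by (simp add: mult.commute)
  qed
  then obtain b where Gb: "G = (\<lambda>ks. b * tpow q v ks)"
    using rank_one_if_slices_parallel[OF G _ v0] by blast
  have "b \<noteq> 0" "v \<noteq> 0" using G0 Gb v0 by auto
  then show ?thesis using a0 Fa Gb by blast
qed

lemma symmetric_tensor_ttensor_iff: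
  assumes F: "symmetric_tensor p F" and G: "symmetric_tensor q G" and p: "p \<ge> 1" and q: "q \<ge> 1"
  shows "symmetric_tensor (p + q) (ttensor p q F G) \<longleftrightarrow>
          F = (\<lambda>_. 0) \<or> G = (\<lambda>_. 0) \<or>
          (\<exists>c a b. c \<noteq> 0 \<and> a \<noteq> 0 \<and> b \<noteq> 0 \<and>
             F = (\<lambda>ks. a * tpow p c ks) \<and> G = (\<lambda>ks. b * tpow q c ks))"
    (is "_ \<longleftrightarrow> ?rank_one")
proof
  assume "symmetric_tensor (p + q) (ttensor p q F G)"
  then show ?rank_one using symmetric_ttensor_imp_rank_one[OF F G p q] by blast
next
  assume ?rank_one
  then consider "F = (\<lambda>_. 0) \<or> G = (\<lambda>_. 0)" | a b c where
      "F = (\<lambda>ks. a * tpow p c ks)" "G = (\<lambda>ks. b * tpow q c ks)"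
    by blast
  then show "symmetric_tensor (p + q) (ttensor p q F G)"
  proof cases
    case 1
    then show ?thesis by (auto simp: symmetric_tensor_def is_tensor_def ttensor_def)
  next
    case (2 a b c)
    then have "ttensor p q F G = (\<lambda>ks. (a * b) * tpow (p + q) c ks)"
      by (simp add: tpow_add ttensor_def fun_eq_iff)
    then show ?thesis
      using symmetric_tensor_tpow[of "p + q" c] by (simp add: symmetric_tensor_def is_tensor_def)
  qed
qed

lemma hs_norm_sym_tensor_prod:
  assumes F: "symmetric_tensor p F" and G: "symmetric_tensor q G" and p: "p \<ge> 1" and q: "q \<ge> 1"
  shows "hs_norm (p + q) (sym_tensor_prod p q F G) \<le> hs_norm p F * hs_norm q G \<and>
       (hs_norm (p + q) (sym_tensor_prod p q F G) = hs_norm p F * hs_norm q G \<longleftrightarrow>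
          F = (\<lambda>_. 0) \<or> G = (\<lambda>_. 0) \<or>
          (\<exists>c a b. c \<noteq> 0 \<and> a \<noteq> 0 \<and> b \<noteq> 0 \<and>
             F = (\<lambda>ks. a * tpow p c ks) \<and> G = (\<lambda>ks. b * tpow q c ks)))"
proof -
  have "tsym (p + q) (ttensor p q F G) = ttensor p q F G \<longleftrightarrow> symmetric_tensor (p + q) (ttensor p q F G)"
    by (metis symmetric_tensor_tsym tsym_eq_self)
  then show ?thesis
    using hs_norm_tsym[OF is_tensor_ttensor[of p q F G]] symmetric_tensor_ttensor_iff[OF assms]
    unfolding sym_tensor_prod_eq_tsym hs_norm_ttensor by simp
qed

section \<open>Banach's theorem\<close>

lemma eq_scaleR_if_inner_attains_bound:
  fixes w z :: "'a::real_inner"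
  assumes z: "norm z = 1" and attained: "\<bar>z \<bullet> w\<bar> = M"
    and bound: "\<And>y. norm y = 1 \<Longrightarrow> \<bar>y \<bullet> w\<bar> \<le> M"
  shows "w = (z \<bullet> w) *\<^sub>R z"
proof -
  have "norm w \<le> M"
  proof (cases "w = 0")
    case False
    have "\<bar>(1 / norm w) *\<^sub>R w \<bullet> w\<bar> \<le> M" using False by (intro bound) simp
    then show ?thesis using False by (simp add: dot_square_norm power2_eq_square)
  qed (use attained in auto)
  then have "(norm w)\<^sup>2 \<le> (z \<bullet> w)\<^sup>2"
    using attained by (metis abs_le_square_iff norm_ge_zero power2_abs abs_of_nonneg)
  moreover have "(norm (w - (z \<bullet> w) *\<^sub>R z))\<^sup>2 = (norm w)\<^sup>2 - (z \<bullet> w)\<^sup>2"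
  proof -
    have "z \<bullet> z = 1" using z by (simp add: dot_square_norm)
    then have "(w - (z \<bullet> w) *\<^sub>R z) \<bullet> (w - (z \<bullet> w) *\<^sub>R z) = w \<bullet> w - (z \<bullet> w)\<^sup>2"
      by (simp add: inner_diff_left inner_diff_right inner_commute power2_eq_square)
    then show ?thesis by (simp add: dot_square_norm)
  qed
  ultimately have "(norm (w - (z \<bullet> w) *\<^sub>R z))\<^sup>2 = 0"
    using zero_le_power2[of "norm (w - (z \<bullet> w) *\<^sub>R z)"] by linarith
  then show ?thesis by simp
qed

lemma unit_vectors_collinear:
  fixes a b :: "'a::real_inner"
  assumes "norm a = 1" "norm b = 1" "\<bar>a \<bullet> b\<bar> = 1"
  shows "b = (a \<bullet> b) *\<^sub>R a"
proof (rule eq_scaleR_if_inner_attains_bound)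
  show "\<bar>y \<bullet> b\<bar> \<le> 1" if "norm y = 1" for y
    using Cauchy_Schwarz_ineq2[of y b] that assms by simp
qed (use assms in auto)

text \<open>Slot \<open>i\<close> of a maximizing family is extremal for the linear form
  \<open>y \<mapsto> y \<bullet> slot_vector S d f i\<close>, which forces the slot vector to be parallel to \<open>f i\<close>.\<close>
lemma mlform_maximizer_fun_upd:
  assumes f: "\<forall>j<d. norm (f j) = 1" and max: "\<bar>mlform S d f\<bar> = spec_norm d S" and i: "i < d"
  shows "mlform S d (f(i := y)) = mlform S d f * (f i \<bullet> y)"
proof -
  let ?W = "slot_vector S d f i"
  have "f i \<bullet> ?W = mlform S d f"
    using mlform_fun_upd[OF i, of S f "f i"] by simp
  moreover have "\<bar>y \<bullet> ?W\<bar> \<le> spec_norm d S" if "norm y = 1" for y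
    using f that by (auto simp: mlform_fun_upd[OF i, symmetric] intro!: spec_norm_upper)
  ultimately have "?W = mlform S d f *\<^sub>R f i"
    using f i max eq_scaleR_if_inner_attains_bound[of "f i" ?W] by simp
  then show ?thesis by (simp add: mlform_fun_upd[OF i] inner_commute)
qed

lemma symmetric_mlform_maximizer_two_slots:
  fixes \<alpha> \<beta> :: real
  assumes S: "symmetric_tensor d S" and f: "\<forall>j<d. norm (f j) = 1"
    and max: "\<bar>mlform S d f\<bar> = spec_norm d S" and ij: "i < d" "j < d" "i \<noteq> j"
  defines "x \<equiv> \<alpha> *\<^sub>R f i + \<beta> *\<^sub>R f j"
  shows "mlform S d (f(i := x, j := x))
    = mlform S d f * (\<alpha>\<^sup>2 * (f i \<bullet> f j) + 2 * \<alpha> * \<beta> + \<beta>\<^sup>2 * (f i \<bullet> f j))"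
proof -
  define B where "B u w = mlform S d (f(i := u, j := w))" for u w
  have lin1: "B (r *\<^sub>R u + q *\<^sub>R u') w = r * B u w + q * B u' w" for r q u u' w
    unfolding B_def using ij by (simp add: fun_upd_twist[of i j] mlform_fun_upd_linear)
  have lin2: "B w (r *\<^sub>R u + q *\<^sub>R u') = r * B w u + q * B w u'" for r q u u' w
    unfolding B_def using ij by (simp add: mlform_fun_upd_linear)
  have "B (f i) (f i) = mlform S d f * (f i \<bullet> f j)"
    using mlform_maximizer_fun_upd[OF f max ij(2), of "f i"] by (simp add: B_def inner_commute)
  moreover have "B (f j) (f j) = mlform S d f * (f i \<bullet> f j)"
  proof -
    have "f(i := f j, j := f j) = f(i := f j)" using ij by (auto simp: fun_eq_iff)
    then show ?thesis using mlform_maximizer_fun_upd[OF f max ij(1), of "f j"] by (simp add: B_def)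
  qed
  moreover have "B (f i) (f j) = mlform S d f" by (simp add: B_def)
  moreover have "B (f j) (f i) = mlform S d f"
    using mlform_symmetric_swap[OF S ij] by (simp add: B_def)
  ultimately show ?thesis
    unfolding x_def B_def[symmetric] lin1 lin2 by (simp add: power2_eq_square algebra_simps)
qed

lemma unit_pair_sum_diff:
  fixes a b :: "real^'n::finite"
  assumes a: "norm a = 1" and b: "norm b = 1" and c: "\<bar>a \<bullet> b\<bar> < 1"
  defines "u \<equiv> (1 / norm (a + b)) *\<^sub>R (a + b)" and "v \<equiv> (1 / norm (a - b)) *\<^sub>R (a - b)"
  shows "(norm (a + b))\<^sup>2 = 2 + 2 * (a \<bullet> b)" "(norm (a - b))\<^sup>2 = 2 - 2 * (a \<bullet> b)"
    and "norm u = 1" "norm v = 1" "u \<bullet> v = 0"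
    and "(1 + a \<bullet> b) * (u $ x * u $ y) + (1 - a \<bullet> b) * (v $ x * v $ y) = a $ x * a $ y + b $ x * b $ y"
proof -
  have unit: "a \<bullet> a = 1" "b \<bullet> b = 1" using a b by (simp_all add: dot_square_norm)
  then show sum2: "(norm (a + b))\<^sup>2 = 2 + 2 * (a \<bullet> b)" and diff2: "(norm (a - b))\<^sup>2 = 2 - 2 * (a \<bullet> b)"
    by (simp_all add: power2_norm_eq_inner inner_add_left inner_add_right inner_diff_left
        inner_diff_right inner_commute)
  have "a + b \<noteq> 0" "a - b \<noteq> 0" using sum2 diff2 c by auto
  then show "norm u = 1" "norm v = 1" by (simp_all add: u_def v_def)
  have "(a + b) \<bullet> (a - b) = 0"
    using unit by (simp add: inner_add_left inner_diff_right inner_commute[of b a])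
  then show "u \<bullet> v = 0" by (simp add: u_def v_def)
  have "(1 + a \<bullet> b) * (u $ x * u $ y) = (1 + a \<bullet> b) * ((a $ x + b $ x) * (a $ y + b $ y)) / (norm (a + b))\<^sup>2"
    by (simp add: u_def power2_eq_square)
  also have "\<dots> = (a $ x + b $ x) * (a $ y + b $ y) / 2"
    unfolding sum2 using c by (simp add: field_simps)
  finally have plus: "(1 + a \<bullet> b) * (u $ x * u $ y) = (a $ x + b $ x) * (a $ y + b $ y) / 2" .
  have "(1 - a \<bullet> b) * (v $ x * v $ y) = (1 - a \<bullet> b) * ((a $ x - b $ x) * (a $ y - b $ y)) / (norm (a - b))\<^sup>2"
    by (simp add: v_def power2_eq_square)
  also have "\<dots> = (a $ x - b $ x) * (a $ y - b $ y) / 2"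
    unfolding diff2 using c by (simp add: field_simps)
  finally have minus: "(1 - a \<bullet> b) * (v $ x * v $ y) = (a $ x - b $ x) * (a $ y - b $ y) / 2" .
  from plus minus show "(1 + a \<bullet> b) * (u $ x * u $ y) + (1 - a \<bullet> b) * (v $ x * v $ y) = a $ x * a $ y + b $ x * b $ y"
    by (simp add: field_simps)
qed

text \<open>Families are indexed by all of \<open>nat\<close>, so that they form a product of spheres,
  compact by Tychonoff's theorem; only the members below \<open>d\<close> ever matter.\<close>
definition unit_families :: "(nat \<Rightarrow> real^'n::finite) set" where
  "unit_families = PiE UNIV (\<lambda>_. sphere 0 1)"

lemma mem_unit_families: "f \<in> unit_families \<longleftrightarrow> (\<forall>k. norm (f k) = 1)"
  by (simp add: unit_families_def PiE_iff)

lemma compact_unit_families: "compact (unit_families :: (nat \<Rightarrow> real^'n::finite) set)"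
  using compactin_PiE[of "\<lambda>_. euclidean" UNIV "\<lambda>_. sphere (0::real^'n) 1"]
  unfolding unit_families_def euclidean_product_topology by simp

lemma continuous_on_mlform: "continuous_on UNIV (\<lambda>f::nat \<Rightarrow> real^'n::finite. mlform S d f)"
  unfolding mlform_def prod_entries_def
  by (intro continuous_intros continuous_on_component continuous_on_product_coordinates)

definition gram :: "nat \<Rightarrow> (nat \<Rightarrow> real^'n::finite) \<Rightarrow> 'n \<Rightarrow> 'n \<Rightarrow> real" where
  "gram d f x y = (\<Sum>k<d. f k $ x * f k $ y)"

definition frame_potential :: "nat \<Rightarrow> (nat \<Rightarrow> real^'n::finite) \<Rightarrow> real" where
  "frame_potential d f = (\<Sum>p\<in>UNIV. (gram d f (fst p) (snd p))\<^sup>2)"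

lemma continuous_on_frame_potential:
  "continuous_on UNIV (\<lambda>f::nat \<Rightarrow> real^'n::finite. frame_potential d f)"
  unfolding frame_potential_def gram_def
  by (intro continuous_intros continuous_on_component continuous_on_product_coordinates)

lemma gram_fun_upd2:
  assumes "i < d" "j < d" "i \<noteq> j"
  shows "gram d (f(i := u, j := w)) x y
    = gram d f x y - (f i $ x * f i $ y + f j $ x * f j $ y) + (u $ x * u $ y + w $ x * w $ y)"
proof -
  have split: "(\<Sum>k<d. h k) = h i + h j + (\<Sum>k\<in>{..<d}-{i}-{j}. h k)" for h :: "nat \<Rightarrow> real"
    using assms by (simp add: sum.remove[of "{..<d}" i] sum.remove[of "{..<d}-{i}" j])
  show ?thesis
    unfolding gram_def split[of "\<lambda>k. (f(i := u, j := w)) k $ x * (f(i := u, j := w)) k $ y"]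
      split[of "\<lambda>k. f k $ x * f k $ y"]
    using assms by simp
qed

lemma sum_squares_strictly_convex:
  fixes X Y Z :: "'a::finite \<Rightarrow> real"
  assumes "\<alpha> > 0" "\<beta> > 0" "\<alpha> + \<beta> = 1" and Z: "\<And>p. Z p = \<alpha> * X p + \<beta> * Y p"
    and "X p0 \<noteq> Y p0"
  shows "(\<Sum>p\<in>UNIV. (Z p)\<^sup>2) < max (\<Sum>p\<in>UNIV. (X p)\<^sup>2) (\<Sum>p\<in>UNIV. (Y p)\<^sup>2)"
proof -
  have sq: "(Z p)\<^sup>2 = \<alpha> * (X p)\<^sup>2 + \<beta> * (Y p)\<^sup>2 - \<alpha> * \<beta> * (X p - Y p)\<^sup>2" for p
    unfolding Z power2_eq_square using \<open>\<alpha> + \<beta> = 1\<close> by algebra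
  have "(\<Sum>p\<in>UNIV. (Z p)\<^sup>2) < (\<Sum>p\<in>UNIV. \<alpha> * (X p)\<^sup>2 + \<beta> * (Y p)\<^sup>2)"
  proof (rule sum_strict_mono_ex1)
    show "\<forall>p\<in>UNIV. (Z p)\<^sup>2 \<le> \<alpha> * (X p)\<^sup>2 + \<beta> * (Y p)\<^sup>2"
      using \<open>\<alpha> > 0\<close> \<open>\<beta> > 0\<close> by (simp add: sq)
    show "\<exists>p\<in>UNIV. (Z p)\<^sup>2 < \<alpha> * (X p)\<^sup>2 + \<beta> * (Y p)\<^sup>2"
      using \<open>\<alpha> > 0\<close> \<open>\<beta> > 0\<close> \<open>X p0 \<noteq> Y p0\<close> by (intro bexI[of _ p0]) (simp_all add: sq)
  qed simp
  also have "\<dots> = \<alpha> * (\<Sum>p\<in>UNIV. (X p)\<^sup>2) + \<beta> * (\<Sum>p\<in>UNIV. (Y p)\<^sup>2)"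
    by (simp add: sum.distrib sum_distrib_left)
  also have "\<dots> \<le> \<alpha> * max (\<Sum>p\<in>UNIV. (X p)\<^sup>2) (\<Sum>p\<in>UNIV. (Y p)\<^sup>2)
      + \<beta> * max (\<Sum>p\<in>UNIV. (X p)\<^sup>2) (\<Sum>p\<in>UNIV. (Y p)\<^sup>2)"
    using assms by (intro add_mono mult_left_mono) auto
  finally show ?thesis using assms by (simp add: distrib_right[symmetric])
qed

lemma symmetric_mlform_maximizer_sum_diff:
  fixes f :: "nat \<Rightarrow> real^'n::finite"
  assumes S: "symmetric_tensor d S" and f: "\<forall>j<d. norm (f j) = 1"
    and max: "\<bar>mlform S d f\<bar> = spec_norm d S"
    and ij: "i < d" "j < d" "i \<noteq> j" and not_parallel: "\<bar>f i \<bullet> f j\<bar> < 1"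
  defines "u \<equiv> (1 / norm (f i + f j)) *\<^sub>R (f i + f j)" and "v \<equiv> (1 / norm (f i - f j)) *\<^sub>R (f i - f j)"
  shows "mlform S d (f(i := u, j := u)) = mlform S d f"
    and "mlform S d (f(i := v, j := v)) = - mlform S d f"
proof -
  define c where "c = f i \<bullet> f j"
  have ab: "norm (f i) = 1" "norm (f j) = 1" using f ij by auto
  note sum_diff = unit_pair_sum_diff[OF ab not_parallel, folded c_def]
  note two_slots = symmetric_mlform_maximizer_two_slots[OF S f max ij, folded c_def]
  define t where "t = norm (f i + f j)"
  have t: "t * t = 2 + 2 * c" "t \<noteq> 0" "2 + 2 * c \<noteq> 0"
    using sum_diff(1) not_parallel by (auto simp: t_def c_def power2_eq_square)
  have "u = (1 / t) *\<^sub>R f i + (1 / t) *\<^sub>R f j"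
    by (simp add: u_def t_def scaleR_add_right)
  then have "mlform S d (f(i := u, j := u))
      = mlform S d f * ((1 / t)\<^sup>2 * c + 2 * (1 / t) * (1 / t) + (1 / t)\<^sup>2 * c)"
    by (simp only: two_slots)
  also have "(1 / t)\<^sup>2 * c + 2 * (1 / t) * (1 / t) + (1 / t)\<^sup>2 * c = (2 + 2 * c) / (t * t)"
    using t(2) by (simp add: power2_eq_square field_simps)
  also have "\<dots> = 1" using t(1,3) by simp
  finally show "mlform S d (f(i := u, j := u)) = mlform S d f" by (simp only: mult_1_right)
  define t' where "t' = norm (f i - f j)"
  have t': "t' * t' = 2 - 2 * c" "t' \<noteq> 0" "2 - 2 * c \<noteq> 0"
    using sum_diff(2) not_parallel by (auto simp: t'_def c_def power2_eq_square)
  have "v = (1 / t') *\<^sub>R f i + (- 1 / t') *\<^sub>R f j"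
    by (simp add: v_def t'_def scaleR_diff_right)
  then have "mlform S d (f(i := v, j := v))
      = mlform S d f * ((1 / t')\<^sup>2 * c + 2 * (1 / t') * (- 1 / t') + (- 1 / t')\<^sup>2 * c)"
    by (simp only: two_slots)
  also have "(1 / t')\<^sup>2 * c + 2 * (1 / t') * (- 1 / t') + (- 1 / t')\<^sup>2 * c = - ((2 - 2 * c) / (t' * t'))"
    using t'(2) by (simp add: power2_eq_square field_simps)
  also have "\<dots> = - 1" using t'(1,3) by simp
  finally show "mlform S d (f(i := v, j := v)) = - mlform S d f" by (simp only: mult_minus1_right)
qed

lemma frame_potential_sum_diff:
  fixes f :: "nat \<Rightarrow> real^'n::finite"
  assumes ab: "norm (f i) = 1" "norm (f j) = 1" and ij: "i < d" "j < d" "i \<noteq> j"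
    and not_parallel: "\<bar>f i \<bullet> f j\<bar> < 1"
  defines "u \<equiv> (1 / norm (f i + f j)) *\<^sub>R (f i + f j)" and "v \<equiv> (1 / norm (f i - f j)) *\<^sub>R (f i - f j)"
  shows "frame_potential d f
    < max (frame_potential d (f(i := u, j := u))) (frame_potential d (f(i := v, j := v)))"
proof -
  define a b c where "a = f i" and "b = f j" and "c = f i \<bullet> f j"
  note sum_diff = unit_pair_sum_diff[OF ab not_parallel, folded u_def v_def c_def a_def b_def]
  define X Y Z where "X p = gram d (f(i := u, j := u)) (fst p) (snd p)"
    and "Y p = gram d (f(i := v, j := v)) (fst p) (snd p)" and "Z p = gram d f (fst p) (snd p)" for p
  have XY: "X p = Z p - (a $ fst p * a $ snd p + b $ fst p * b $ snd p) + 2 * (u $ fst p * u $ snd p)"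
    "Y p = Z p - (a $ fst p * a $ snd p + b $ fst p * b $ snd p) + 2 * (v $ fst p * v $ snd p)" for p
    unfolding X_def Y_def Z_def a_def b_def gram_fun_upd2[OF ij] by simp_all
  have "Z p = (1 + c) / 2 * X p + (1 - c) / 2 * Y p" for p
    unfolding XY using sum_diff(6)[of "fst p" "snd p"] by (simp add: field_simps)
  moreover obtain p0 where "X p0 \<noteq> Y p0"
  proof (rule ccontr)
    assume "\<not> thesis"
    then have "X (x, y) = Y (x, y)" for x y using that by blast
    then have "u $ x * u $ y = v $ x * v $ y" for x y using XY[of "(x, y)"] by simp
    then have "(\<Sum>y\<in>UNIV. u $ x * u $ y * v $ y) = (\<Sum>y\<in>UNIV. v $ x * v $ y * v $ y)" for x
      by simp
    then have "v $ x * (v \<bullet> v) = u $ x * (u \<bullet> v)" for x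
      by (simp add: inner_vec_def sum_distrib_left mult.assoc)
    then have "v = 0" using sum_diff(4,5) by (simp add: vec_eq_iff dot_square_norm)
    then show False using sum_diff(4) by simp
  qed
  ultimately show ?thesis
    unfolding frame_potential_def X_def[symmetric] Y_def[symmetric] Z_def[symmetric]
    using not_parallel by (intro sum_squares_strictly_convex[of "(1 + c) / 2" "(1 - c) / 2"])
      (auto simp: c_def add_divide_distrib[symmetric])
qed

lemma frame_potential_increase:
  fixes f :: "nat \<Rightarrow> real^'n::finite"
  assumes S: "symmetric_tensor d S" and f: "f \<in> unit_families"
    and max: "\<bar>mlform S d f\<bar> = spec_norm d S"
    and ij: "i < d" "j < d" "i \<noteq> j" and not_parallel: "\<bar>f i \<bullet> f j\<bar> < 1"
  shows "\<exists>g\<in>unit_families. \<bar>mlform S d g\<bar> = spec_norm d S \<and> frame_potential d g > frame_potential d f"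
proof -
  define u v where "u = (1 / norm (f i + f j)) *\<^sub>R (f i + f j)" and "v = (1 / norm (f i - f j)) *\<^sub>R (f i - f j)"
  have unit: "\<forall>j<d. norm (f j) = 1" "norm (f i) = 1" "norm (f j) = 1"
    using f by (simp_all add: mem_unit_families)
  note sum_diff = unit_pair_sum_diff[OF unit(2,3) not_parallel, folded u_def v_def]
  have families: "f(i := u, j := u) \<in> unit_families" "f(i := v, j := v) \<in> unit_families"
    using f sum_diff by (auto simp: mem_unit_families)
  note value_change = symmetric_mlform_maximizer_sum_diff[OF S unit(1) max ij not_parallel, folded u_def v_def]
  note increase = frame_potential_sum_diff[OF unit(2,3) ij not_parallel, folded u_def v_def]
  show ?thesis
  proof (cases "frame_potential d (f(i := u, j := u)) \<le> frame_potential d (f(i := v, j := v))")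
    case True
    then show ?thesis using families value_change increase max by (intro bexI[of _ "f(i := v, j := v)"]) auto
  next
    case False
    then show ?thesis using families value_change increase max by (intro bexI[of _ "f(i := u, j := u)"]) auto
  qed
qed

lemma spec_norm_attained:
  "\<exists>f\<in>unit_families. \<bar>mlform S d f\<bar> = spec_norm d (S :: 'n::finite list \<Rightarrow> real)"
proof -
  define e :: "real^'n" where "e = axis undefined 1"
  have e: "norm e = 1" by (simp add: e_def)
  have "(\<lambda>_. e) \<in> unit_families" using e by (simp add: mem_unit_families)
  then obtain f where f: "f \<in> unit_families" and fmax: "\<forall>g\<in>unit_families. \<bar>mlform S d g\<bar> \<le> \<bar>mlform S d f\<bar>"
    using continuous_attains_sup[OF compact_unit_families _ continuous_on_rabs[OF continuous_on_mlform[THEN continuous_on_subset]]]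
    by blast
  have "spec_norm d S \<le> \<bar>mlform S d f\<bar>"
  proof (rule spec_norm_least)
    fix g :: "nat \<Rightarrow> real^'n" assume g: "\<forall>j<d. norm (g j) = 1"
    have "(\<lambda>j. if j < d then g j else e) \<in> unit_families" using g e by (simp add: mem_unit_families)
    moreover have "mlform S d g = mlform S d (\<lambda>j. if j < d then g j else e)" by (rule mlform_cong) simp
    ultimately show "\<bar>mlform S d g\<bar> \<le> \<bar>mlform S d f\<bar>" using fmax by simp
  qed
  moreover have "\<bar>mlform S d f\<bar> \<le> spec_norm d S"
    using f by (intro spec_norm_upper) (simp add: mem_unit_families)
  ultimately show ?thesis using f by (intro bexI[of _ f]) auto
qed

lemma abs_mlform_signed_family:
  assumes "\<And>k. k < d \<Longrightarrow> f k = \<epsilon> k *\<^sub>R x" "\<And>k. k < d \<Longrightarrow> \<bar>\<epsilon> k\<bar> = 1"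
  shows "\<bar>mlform S d f\<bar> = \<bar>mlform S d (\<lambda>_. x)\<bar>"
proof -
  have "prod_entries d f ks = (\<Prod>k<d. \<epsilon> k) * prod_entries d (\<lambda>_. x) ks" for ks
    unfolding prod_entries_def using assms(1) by (simp add: prod.distrib[symmetric])
  then have "mlform S d f = (\<Prod>k<d. \<epsilon> k) * mlform S d (\<lambda>_. x)"
    unfolding mlform_def by (simp add: sum_distrib_left mult_ac)
  moreover have "\<bar>\<Prod>k<d. \<epsilon> k\<bar> = 1" unfolding abs_prod using assms(2) by simp
  ultimately show ?thesis by (simp add: abs_mult)
qed

lemma symmetric_spec_norm_attained_diagonal:
  assumes S: "symmetric_tensor d S" and d: "d \<ge> 1"
  shows "\<exists>x. norm x = 1 \<and> spec_norm d S = \<bar>tinner d S (tpow d x)\<bar>"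
proof -
  define K where "K = unit_families \<inter> {f. \<bar>mlform S d f\<bar> = spec_norm d S}"
  have "closed {f. \<bar>mlform S d f\<bar> = spec_norm d S}"
    by (intro closed_Collect_eq continuous_on_rabs continuous_on_mlform continuous_on_const)
  then have "compact K" unfolding K_def using compact_unit_families by (rule compact_Int_closed[rotated])
  moreover have "K \<noteq> {}" using spec_norm_attained[of S d] by (auto simp: K_def)
  ultimately obtain f where f: "f \<in> K" and fmax: "\<forall>g\<in>K. frame_potential d g \<le> frame_potential d f"
    using continuous_attains_sup[OF _ _ continuous_on_frame_potential[THEN continuous_on_subset]] by blast
  have unit: "norm (f k) = 1" for k using f by (simp add: K_def mem_unit_families)
  have parallel: "\<bar>f 0 \<bullet> f k\<bar> = 1" if "k < d" for k
  proof (rule ccontr)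
    assume "\<bar>f 0 \<bullet> f k\<bar> \<noteq> 1"
    moreover have "\<bar>f 0 \<bullet> f k\<bar> \<le> 1" using Cauchy_Schwarz_ineq2[of "f 0" "f k"] unit by simp
    moreover have "f 0 \<bullet> f 0 = 1" using unit[of 0] by (simp add: dot_square_norm)
    ultimately have "\<bar>f 0 \<bullet> f k\<bar> < 1" "0 \<noteq> k" by fastforce+
    with f d that obtain g where "g \<in> K" "frame_potential d g > frame_potential d f"
      using frame_potential_increase[OF S, of f 0 k] unfolding K_def by auto
    then show False using fmax by fastforce
  qed
  have "\<bar>mlform S d f\<bar> = \<bar>mlform S d (\<lambda>_. f 0)\<bar>"
    using unit_vectors_collinear[OF unit unit parallel] parallel
    by (intro abs_mlform_signed_family) auto
  then show ?thesis
    using f unit by (intro exI[of _ "f 0"]) (simp add: K_def tinner_tpow_eq_mlform)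
qed

lemma symmetric_spec_norm_is_max:
  assumes "symmetric_tensor d S" "d \<ge> 1"
  shows "\<forall>x\<in>sphere 0 1. \<bar>tinner d S (tpow d x)\<bar> \<le> spec_norm d S"
    and "\<exists>x\<in>sphere 0 1. \<bar>tinner d S (tpow d x)\<bar> = spec_norm d S"
proof -
  show "\<forall>x\<in>sphere 0 1. \<bar>tinner d S (tpow d x)\<bar> \<le> spec_norm d S"
    by (simp add: mem_sphere_0 abs_tinner_tpow_le_spec_norm)
  show "\<exists>x\<in>sphere 0 1. \<bar>tinner d S (tpow d x)\<bar> = spec_norm d S"
    using symmetric_spec_norm_attained_diagonal[OF assms] by (metis mem_sphere_0)
qed

lemma spec_norm_tsym:
  assumes "d \<ge> 1"
  shows "spec_norm d (tsym d T) \<le> spec_norm d T \<and>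
    (spec_norm d (tsym d T) = spec_norm d T \<longleftrightarrow> (\<exists>x. norm x = 1 \<and> spec_norm d T = \<bar>tinner d T (tpow d x)\<bar>))"
  using spec_norm_tsym_le[of d T]
    symmetric_spec_norm_is_max[OF symmetric_tensor_tsym assms, of T]
    abs_tinner_tpow_le_spec_norm[of _ d T]
  by (auto simp: tinner_tsym_tpow intro: antisym)

section \<open>Homogeneous polynomials\<close>

lemma abs_max_mult:
  fixes f g :: "'a \<Rightarrow> real"
  assumes f: "\<forall>x\<in>K. \<bar>f x\<bar> \<le> a" "\<exists>x\<in>K. \<bar>f x\<bar> = a"
    and g: "\<forall>x\<in>K. \<bar>g x\<bar> \<le> b" "\<exists>x\<in>K. \<bar>g x\<bar> = b"
    and fg: "\<forall>x\<in>K. \<bar>f x * g x\<bar> \<le> m" "\<exists>x\<in>K. \<bar>f x * g x\<bar> = m"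
  shows "m \<le> a * b \<and> (m = a * b \<longleftrightarrow> (\<exists>x\<in>K. \<bar>f x\<bar> = a \<and> \<bar>g x\<bar> = b))"
proof -
  obtain x where x: "x \<in> K" "\<bar>f x\<bar> * \<bar>g x\<bar> = m" using fg by (auto simp: abs_mult)
  have fx: "\<bar>f x\<bar> \<le> a" and gx: "\<bar>g x\<bar> \<le> b" using f g x by auto
  then have le: "m \<le> a * b" unfolding x(2)[symmetric] by (intro mult_mono) auto
  have "\<exists>y\<in>K. \<bar>f y\<bar> = a \<and> \<bar>g y\<bar> = b" if eq: "m = a * b"
  proof (cases "a = 0 \<or> b = 0")
    case True
    then show ?thesis using f g by force
  next
    case False
    then have ab: "a > 0" "b > 0" using f g by force+
    have "(a - \<bar>f x\<bar>) * \<bar>g x\<bar> + a * (b - \<bar>g x\<bar>) = 0"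
      using eq x(2) by (simp add: algebra_simps)
    moreover have "(a - \<bar>f x\<bar>) * \<bar>g x\<bar> \<ge> 0" "a * (b - \<bar>g x\<bar>) \<ge> 0" using fx gx ab by simp_all
    ultimately have "a * (b - \<bar>g x\<bar>) = 0" "(a - \<bar>f x\<bar>) * \<bar>g x\<bar> = 0" by linarith+
    then show ?thesis using x(1) ab by (intro bexI[of _ x]) auto
  qed
  moreover have "a * b \<le> m" if "y \<in> K" "\<bar>f y\<bar> = a" "\<bar>g y\<bar> = b" for y
    using fg that by (metis abs_mult)
  ultimately show ?thesis using le by fastforce
qed

lemma abs_max_power:
  fixes f :: "'a \<Rightarrow> real"
  assumes f: "\<forall>x\<in>K. \<bar>f x\<bar> \<le> a" "\<exists>x\<in>K. \<bar>f x\<bar> = a"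
    and fk: "\<forall>x\<in>K. \<bar>f x ^ k\<bar> \<le> m" "\<exists>x\<in>K. \<bar>f x ^ k\<bar> = m"
  shows "m = a ^ k"
proof (rule antisym)
  show "m \<le> a ^ k" using f fk by (auto simp: power_abs intro: power_mono)
  show "a ^ k \<le> m" using f fk by (auto simp: power_abs)
qed

lemma tinner_tpow_power:
  assumes F: "symmetric_tensor p F" and k: "k \<ge> 1"
  shows "\<exists>P. symmetric_tensor (k * p) P \<and> (\<forall>x. tinner (k * p) P (tpow (k * p) x) = (tinner p F (tpow p x)) ^ k)"
  using k
proof (induction k rule: dec_induct)
  case base
  then show ?case using F by auto
next
  case (step k)
  then obtain P where P: "symmetric_tensor (k * p) P" "\<forall>x. tinner (k * p) P (tpow (k * p) x) = (tinner p F (tpow p x)) ^ k"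
    by blast
  let ?P = "tsym (k * p + p) (ttensor (k * p) p P F)"
  have "symmetric_tensor (Suc k * p) ?P" using symmetric_tensor_tsym by (simp add: add.commute)
  moreover have "tinner (Suc k * p) ?P (tpow (Suc k * p) x) = (tinner p F (tpow p x)) ^ Suc k" for x
    using tinner_tsym_ttensor_tpow[of "k * p" p P F x] P(2) by (simp add: add.commute mult.commute)
  ultimately show ?case by blast
qed

lemma poly_hs_abs_le:
  assumes F: "symmetric_tensor p F" and f: "f = (\<lambda>x. tinner p F (tpow p x))"
  shows "\<bar>f c\<bar> \<le> poly_hs p f * norm c ^ p \<and>
    (c \<noteq> 0 \<longrightarrow> (\<bar>f c\<bar> = poly_hs p f * norm c ^ p \<longleftrightarrow> (\<exists>a. \<forall>x. f x = a * (c \<bullet> x) ^ p)))"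
  using abs_tinner_tpow_le_hs_norm[OF F] by (simp add: poly_hs_def f poly_tensor_eqI[OF F])

lemma poly_hs_mult:
  assumes F: "symmetric_tensor p F" and G: "symmetric_tensor q G" and "p \<ge> 1" "q \<ge> 1"
    and f: "f = (\<lambda>x. tinner p F (tpow p x))" and g: "g = (\<lambda>x. tinner q G (tpow q x))"
  shows "poly_hs (p + q) (\<lambda>x. f x * g x) \<le> poly_hs p f * poly_hs q g \<and>
       (poly_hs (p + q) (\<lambda>x. f x * g x) = poly_hs p f * poly_hs q g \<longleftrightarrow>
          f = (\<lambda>_. 0) \<or> g = (\<lambda>_. 0) \<or>
          (\<exists>c a b. c \<noteq> 0 \<and> a \<noteq> 0 \<and> b \<noteq> 0 \<and>
             (\<forall>x. f x = a * (c \<bullet> x) ^ p) \<and> (\<forall>x. g x = b * (c \<bullet> x) ^ q)))"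
proof -
  have "poly_tensor (p + q) (\<lambda>x. f x * g x) = sym_tensor_prod p q F G"
    unfolding sym_tensor_prod_eq_tsym f g
    by (rule poly_tensor_eqI[OF symmetric_tensor_tsym]) (simp add: tinner_tsym_ttensor_tpow)
  then show ?thesis
    using hs_norm_sym_tensor_prod[OF assms(1-4)]
    unfolding poly_hs_def f g poly_tensor_eqI[OF F refl] poly_tensor_eqI[OF G refl]
      symmetric_tensor_eq_0_iff[OF F, symmetric] symmetric_tensor_eq_0_iff[OF G, symmetric]
      symmetric_tensor_eq_scaled_tpow_iff[OF F, symmetric] symmetric_tensor_eq_scaled_tpow_iff[OF G, symmetric]
    by simp
qed

lemma poly_sigma_is_max:
  assumes F: "symmetric_tensor p F" "p \<ge> 1" and f: "\<And>x. f x = tinner p F (tpow p x)"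
  shows "\<forall>x\<in>sphere 0 1. \<bar>f x\<bar> \<le> poly_sigma p f" "\<exists>x\<in>sphere 0 1. \<bar>f x\<bar> = poly_sigma p f"
  using symmetric_spec_norm_is_max[OF F] by (simp_all add: poly_sigma_def poly_tensor_eqI[OF F(1) f] f)

lemma poly_sigma_mult:
  assumes F: "symmetric_tensor p F" and G: "symmetric_tensor q G" and p: "p \<ge> 1" and q: "q \<ge> 1"
    and f: "f = (\<lambda>x. tinner p F (tpow p x))" and g: "g = (\<lambda>x. tinner q G (tpow q x))"
  shows "poly_sigma (p + q) (\<lambda>x. f x * g x) \<le> poly_sigma p f * poly_sigma q g \<and>
       (poly_sigma (p + q) (\<lambda>x. f x * g x) = poly_sigma p f * poly_sigma q g \<longleftrightarrow>
          (\<exists>x. norm x = 1 \<and> \<bar>f x\<bar> = poly_sigma p f \<and> \<bar>g x\<bar> = poly_sigma q g))"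
proof -
  have "f x * g x = tinner (p + q) (tsym (p + q) (ttensor p q F G)) (tpow (p + q) x)" for x
    by (simp add: f g tinner_tsym_ttensor_tpow)
  from poly_sigma_is_max[OF symmetric_tensor_tsym _ this] poly_sigma_is_max[OF F p] poly_sigma_is_max[OF G q] p
  show ?thesis
    using abs_max_mult[of "sphere 0 1" f "poly_sigma p f" g "poly_sigma q g"] by (auto simp: f g)
qed

lemma poly_sigma_power:
  assumes F: "symmetric_tensor p F" and p: "p \<ge> 1" and k: "k \<ge> 1"
    and f: "f = (\<lambda>x. tinner p F (tpow p x))"
  shows "poly_sigma (k * p) (\<lambda>x. f x ^ k) = poly_sigma p f ^ k"
proof -
  obtain P where P: "symmetric_tensor (k * p) P" "\<And>x. f x ^ k = tinner (k * p) P (tpow (k * p) x)"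
    using tinner_tpow_power[OF F k] by (auto simp: f)
  have "k * p \<ge> 1" using k p by simp
  from poly_sigma_is_max[OF P(1) this P(2)] poly_sigma_is_max[OF F p]
  show ?thesis by (intro abs_max_power) (auto simp: f)
qed

theorem lemma2p1:
  fixes T F G :: "'n::finite list \<Rightarrow> real" and d p q :: nat
  assumes "d \<ge> 1" and "p \<ge> 1" and "q \<ge> 1"
    and T: "is_tensor d T"
    and F: "symmetric_tensor p F" and G: "symmetric_tensor q G"
  defines "f \<equiv> (\<lambda>x. tinner p F (tpow p x))"
    and "g \<equiv> (\<lambda>x. tinner q G (tpow q x))"
  shows
   "(hs_norm d (tsym d T) \<le> hs_norm d T \<and>
       (hs_norm d (tsym d T) = hs_norm d T \<longleftrightarrow> tsym d T = T))
    \<and> (\<forall>x. tinner d T (tpow d x) = tinner d (tsym d T) (tpow d x))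
    \<and> (spec_norm d (tsym d T) \<le> spec_norm d T \<and>
       (spec_norm d (tsym d T) = spec_norm d T \<longleftrightarrow>
          (\<exists>x. norm x = 1 \<and> spec_norm d T = \<bar>tinner d T (tpow d x)\<bar>)))
    \<and> sym_tensor_prod p q F G = tsym (p + q) (ttensor p q F G)
    \<and> (hs_norm (p + q) (sym_tensor_prod p q F G) \<le> hs_norm p F * hs_norm q G \<and>
       (hs_norm (p + q) (sym_tensor_prod p q F G) = hs_norm p F * hs_norm q G \<longleftrightarrow>
          F = (\<lambda>_. 0) \<or> G = (\<lambda>_. 0) \<or>
          (\<exists>c a b. c \<noteq> 0 \<and> a \<noteq> 0 \<and> b \<noteq> 0 \<and>
             F = (\<lambda>is. a * tpow p c is) \<and> G = (\<lambda>is. b * tpow q c is))))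
    \<and> (\<forall>c. \<bar>f c\<bar> \<le> poly_hs p f * norm c ^ p \<and>
          (c \<noteq> 0 \<longrightarrow> (\<bar>f c\<bar> = poly_hs p f * norm c ^ p \<longleftrightarrow>
              (\<exists>a. \<forall>x. f x = a * (c \<bullet> x) ^ p))))
    \<and> (poly_hs (p + q) (\<lambda>x. f x * g x) \<le> poly_hs p f * poly_hs q g \<and>
       (poly_hs (p + q) (\<lambda>x. f x * g x) = poly_hs p f * poly_hs q g \<longleftrightarrow>
          f = (\<lambda>_. 0) \<or> g = (\<lambda>_. 0) \<or>
          (\<exists>c a b. c \<noteq> 0 \<and> a \<noteq> 0 \<and> b \<noteq> 0 \<and>
             (\<forall>x. f x = a * (c \<bullet> x) ^ p) \<and> (\<forall>x. g x = b * (c \<bullet> x) ^ q))))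
    \<and> (poly_sigma (p + q) (\<lambda>x. f x * g x) \<le> poly_sigma p f * poly_sigma q g \<and>
       (poly_sigma (p + q) (\<lambda>x. f x * g x) = poly_sigma p f * poly_sigma q g \<longleftrightarrow>
          (\<exists>x. norm x = 1 \<and> \<bar>f x\<bar> = poly_sigma p f \<and> \<bar>g x\<bar> = poly_sigma q g)))
    \<and> (\<forall>k::nat. k \<ge> 1 \<longrightarrow> poly_sigma (k * p) (\<lambda>x. f x ^ k) = poly_sigma p f ^ k)"
  using hs_norm_tsym[OF T] tinner_tsym_tpow[of d T] spec_norm_tsym[OF assms(1), of T]
    sym_tensor_prod_eq_tsym[of p q F G] hs_norm_sym_tensor_prod[OF F G assms(2,3)]
    poly_hs_abs_le[OF F f_def[THEN meta_eq_to_obj_eq]] poly_hs_mult[OF F G assms(2,3) f_def[THEN meta_eq_to_obj_eq] g_def[THEN meta_eq_to_obj_eq]]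
    poly_sigma_mult[OF F G assms(2,3) f_def[THEN meta_eq_to_obj_eq] g_def[THEN meta_eq_to_obj_eq]] poly_sigma_power[OF F assms(2) _ f_def[THEN meta_eq_to_obj_eq]]
  by auto

end
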